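(* Let $\theta=[\varphi^T,\mu^T]^T$ and $\theta_0=[\varphi_0^T,\mu_0^T]^T$ belong to $\mathscr{D}(p,r)$ (so $\varphi=\mathrm{vec}(A)$, $\varphi_0=\mathrm{vec}(A_0)$ with $\|A\|_2<1$, $\|A_0\|_2<1$). Then there exists $R(\theta,\theta_0)\in\mathbb{R}^{p\times p}$ such that $$\mathrm{vec}\{\Sigma(\theta)-\Sigma_0\}=D\Sigma(\theta_0)(\theta-\theta_0)+\mathrm{vec}\{R(\theta,\theta_0)\},\qquad \|R(\theta,\theta_0)\|_F\le 16(1+\|M_0\|_2)\|\theta-\theta_0\|_2^2 .$$ In matrix form, with $C_0=(I_p-X_{\varphi_0})^{-1}$, $$\Sigma(\theta)-\Sigma_0=2C_0(X_\varphi-X_{\varphi_0})C_0^T\Sigma_0-2\Sigma_0C_0(X_\varphi-X_{\varphi_0})C_0^T+U_0\{M(\mu)-M_0\}U_0^T+R(\theta,\theta_0).$$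
   Context: Fix integers $1\le r\le p$. For $A\in\mathbb{R}^{(p-r)\times r}$ write $\varphi=\mathrm{vec}(A)$ (column-stacking), $X_\varphi=\begin{bmatrix}0_{r\times r}&-A^{T}\\ A&0\end{bmatrix}$, $I_{p\times r}=\begin{bmatrix}I_r\\0\end{bmatrix}$, and let $U(\varphi)=(I_p+X_\varphi)(I_p-X_\varphi)^{-1}I_{p\times r}$ be the Cayley parameterization, with derivative $DU(\varphi)=2[I_{p\times r}^T(I_p-X_\varphi)^{-T}\otimes(I_p-X_\varphi)^{-1}]\Gamma$, $\Gamma=(I_{p^2}-K_{pp})(\Theta_1^T\otimes\Theta_2^T)$, $\Theta_1=I_{p\times r}^T$, $\Theta_2=[0_{(p-r)\times r},I_{p-r}]$; $K_{pq}$ is the commutation matrix ($\mathrm{vec}(M^T)=K_{pq}\mathrm{vec}(M)$). For a symmetric $r\times r$ matrix $M$, $\mathrm{vech}(M)\in\mathbb{R}^{r(r+1)/2}$ stacks the on-and-below-diagonal entries column by column, $M(\mu)$ is the symmetric matrix with $\mathrm{vech}(M(\mu))=\mu$, and $\mathbb{D}_r$ is the duplication matrix ($\mathrm{vec}(M)=\mathbb{D}_r\mathrm{vech}(M)$). Let $\mathscr{D}(p,r)=\{\theta=[\mathrm{vec}(A)^T,\mu^T]^T: A\in\mathbb{R}^{(p-r)\times r},\|A\|_2<1,\ \mu\in\mathbb{R}^{r(r+1)/2}\}$ and $\Sigma(\theta)=U(\varphi)M(\mu)U(\varphi)^T$. Define $D_\varphi\Sigma(\theta)=(I_{p^2}+K_{pp})\{U(\varphi)M(\mu)\otimes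 I_p\}DU(\varphi)$, $D_\mu\Sigma(\theta)=\{U(\varphi)\otimes U(\varphi)\}\mathbb{D}_r$, $D\Sigma(\theta)=[D_\varphi\Sigma(\theta),\,D_\mu\Sigma(\theta)]$. For the reference point $\theta_0=[\mathrm{vec}(A_0)^T,\mu_0^T]^T$ write $U_0=U(\varphi_0)$, $M_0=M(\mu_0)$, $\Sigma_0=\Sigma(\theta_0)$. *)

theory Defs
  imports Complex_Main "Jordan_Normal_Form.Matrix"
begin

definition vecm :: "real mat \<Rightarrow> real vec" where
  "vecm M = vec (dim_row M * dim_col M) (\<lambda>k. M $$ (k mod dim_row M, k div dim_row M))"

definition kron :: "real mat \<Rightarrow> real mat \<Rightarrow> real mat" where
  "kron A B = mat (dim_row A * dim_row B) (dim_col A * dim_col B)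
     (\<lambda>(i,j). A $$ (i div dim_row B, j div dim_col B) * B $$ (i mod dim_row B, j mod dim_col B))"

text \<open>Commutation matrix K_pq: vec(M^T) = K_pq vec(M) for every p x q matrix M.\<close>
definition commut :: "nat \<Rightarrow> nat \<Rightarrow> real mat" where
  "commut p q = mat (p*q) (p*q) (\<lambda>(i,j). if i = j div p + q * (j mod p) then 1 else 0)"

definition vech :: "real mat \<Rightarrow> real vec" where
  "vech M = vec_of_list (concat (map (\<lambda>j. map (\<lambda>i. M $$ (i,j)) [j..<dim_row M]) [0..<dim_row M]))"

definition symm :: "nat \<Rightarrow> real mat \<Rightarrow> bool" where
  "symm r M \<longleftrightarrow> M \<in> carrier_mat r r \<and> transpose_mat M = M"

definition Mmu :: "nat \<Rightarrow> real vec \<Rightarrow> real mat" where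
  "Mmu r \<mu> = (THE M. symm r M \<and> vech M = \<mu>)"

definition dupl :: "nat \<Rightarrow> real mat" where
  "dupl r = (THE D. D \<in> carrier_mat (r*r) (r*(r+1) div 2) \<and> (\<forall>M. symm r M \<longrightarrow> vecm M = D *\<^sub>v vech M))"

definition minv :: "real mat \<Rightarrow> real mat" where
  "minv A = (SOME B. B \<in> carrier_mat (dim_row A) (dim_row A) \<and> A * B = 1\<^sub>m (dim_row A) \<and> B * A = 1\<^sub>m (dim_row A))"

definition hcat :: "real mat \<Rightarrow> real mat \<Rightarrow> real mat" where
  "hcat A B = mat (dim_row A) (dim_col A + dim_col B)
     (\<lambda>(i,j). if j < dim_col A then A $$ (i,j) else B $$ (i, j - dim_col A))"

definition vnorm :: "real vec \<Rightarrow> real" where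
  "vnorm v = sqrt (\<Sum>i<dim_vec v. (v $ i)^2)"

definition fnorm :: "real mat \<Rightarrow> real" where
  "fnorm M = sqrt (\<Sum>i<dim_row M. \<Sum>j<dim_col M. (M $$ (i,j))^2)"

definition snorm :: "real mat \<Rightarrow> real" where
  "snorm M = Sup {vnorm (M *\<^sub>v x) | x. x \<in> carrier_vec (dim_col M) \<and> vnorm x = 1}"

definition Ipr :: "nat \<Rightarrow> nat \<Rightarrow> real mat" where
  "Ipr p r = mat p r (\<lambda>(i,j). if i = j then 1 else 0)"

definition Xphi :: "nat \<Rightarrow> nat \<Rightarrow> real mat \<Rightarrow> real mat" where
  "Xphi p r A = four_block_mat (0\<^sub>m r r) (- transpose_mat A) A (0\<^sub>m (p-r) (p-r))"

definition Ucay :: "nat \<Rightarrow> nat \<Rightarrow> real mat \<Rightarrow> real mat" where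
  "Ucay p r A = (1\<^sub>m p + Xphi p r A) * minv (1\<^sub>m p - Xphi p r A) * Ipr p r"

definition Theta1 :: "nat \<Rightarrow> nat \<Rightarrow> real mat" where
  "Theta1 p r = transpose_mat (Ipr p r)"

definition Theta2 :: "nat \<Rightarrow> nat \<Rightarrow> real mat" where
  "Theta2 p r = mat (p-r) p (\<lambda>(i,j). if j = r + i then 1 else 0)"

definition Gam :: "nat \<Rightarrow> nat \<Rightarrow> real mat" where
  "Gam p r = (1\<^sub>m (p*p) - commut p p) * kron (transpose_mat (Theta1 p r)) (transpose_mat (Theta2 p r))"

definition DU :: "nat \<Rightarrow> nat \<Rightarrow> real mat \<Rightarrow> real mat" where
  "DU p r A = 2 \<cdot>\<^sub>m (kron (transpose_mat (Ipr p r) * transpose_mat (minv (1\<^sub>m p - Xphi p r A)))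
                          (minv (1\<^sub>m p - Xphi p r A)) * Gam p r)"

definition Sigma :: "nat \<Rightarrow> nat \<Rightarrow> real mat \<Rightarrow> real vec \<Rightarrow> real mat" where
  "Sigma p r A \<mu> = Ucay p r A * Mmu r \<mu> * transpose_mat (Ucay p r A)"

definition DphiSigma :: "nat \<Rightarrow> nat \<Rightarrow> real mat \<Rightarrow> real vec \<Rightarrow> real mat" where
  "DphiSigma p r A \<mu> = (1\<^sub>m (p*p) + commut p p) * kron (Ucay p r A * Mmu r \<mu>) (1\<^sub>m p) * DU p r A"

definition DmuSigma :: "nat \<Rightarrow> nat \<Rightarrow> real mat \<Rightarrow> real mat" where
  "DmuSigma p r A = kron (Ucay p r A) (Ucay p r A) * dupl r"

definition DSigma :: "nat \<Rightarrow> nat \<Rightarrow> real mat \<Rightarrow> real vec \<Rightarrow> real mat" where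
  "DSigma p r A \<mu> = hcat (DphiSigma p r A \<mu>) (DmuSigma p r A)"

definition theta :: "real mat \<Rightarrow> real vec \<Rightarrow> real vec" where
  "theta A \<mu> = vecm A @\<^sub>v \<mu>"

definition inD :: "nat \<Rightarrow> nat \<Rightarrow> real mat \<Rightarrow> real vec \<Rightarrow> bool" where
  "inD p r A \<mu> \<longleftrightarrow> A \<in> carrier_mat (p-r) r \<and> snorm A < 1 \<and> \<mu> \<in> carrier_vec (r*(r+1) div 2)"

end

(* Write Sigma(theta) = U M U^T with U = Q E, where Q = (I + X)(I - X)^-1 and E = I_{p x r}.
   For skew X the resolvent C = (I - X)^-1 is a contraction and Q = 2C - I is orthogonal;
   moreover C - C0 = C (X - X0) C0.  Hence U - U0 = 2 C dX C0 E splits into the first-order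
   term 2 C0 dX C0 E and the second-order term 2 C dX C0 dX C0 E.  Expanding the congruence
   (U, M) |-> U M U^T around (U0, M0), every remainder term is a product of contractions, M0
   and at least two increments, which gives the Frobenius bound.  The first-order part is
   identified with DSigma(theta0)(theta - theta0) through vec(B X A^T) = (A (x) B) vec X,
   K_pp vec M = vec M^T and vec M = D_r vech M.  The contraction bounds hold for every skew X. *)

theory Submission
  imports Defs "HOL-Analysis.L2_Norm" "Jordan_Normal_Form.Determinant"
begin

section \<open>Norms of vectors and matrices\<close>

lemma vnorm_L2: "vnorm v = L2_set (\<lambda>i. v $ i) {..<dim_vec v}"
  unfolding vnorm_def L2_set_def by simp

lemma vnorm_nonneg[simp]: "0 \<le> vnorm v"
  unfolding vnorm_def by (simp add: sum_nonneg)

lemma vnorm_sq: "(vnorm v)^2 = v \<bullet> v"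
  unfolding vnorm_def scalar_prod_def by (simp add: sum_nonneg power2_eq_square atLeast0LessThan)

lemma vnorm_sq': "(vnorm v)^2 = (\<Sum>i<dim_vec v. (v$i)^2)"
  unfolding vnorm_def by (simp add: sum_nonneg)

lemma vnorm_cauchy_schwarz:
  assumes "dim_vec v = dim_vec w"
  shows "\<bar>v \<bullet> w\<bar> \<le> vnorm v * vnorm w"
proof -
  have "\<bar>v \<bullet> w\<bar> = \<bar>\<Sum>i<dim_vec w. v$i * w$i\<bar>" unfolding scalar_prod_def by (simp add: atLeast0LessThan)
  also have "\<dots> \<le> (\<Sum>i<dim_vec w. \<bar>v$i\<bar> * \<bar>w$i\<bar>)" by (rule order_trans[OF sum_abs]) (simp add: abs_mult)
  also have "\<dots> \<le> L2_set (\<lambda>i. v $ i) {..<dim_vec w} * L2_set (\<lambda>i. w $ i) {..<dim_vec w}"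
    by (rule L2_set_mult_ineq)
  finally show ?thesis using assms by (simp add: vnorm_L2)
qed

lemma vnorm_add_le:
  assumes "dim_vec v = dim_vec w"
  shows "vnorm (v + w) \<le> vnorm v + vnorm w"
proof -
  have "vnorm (v + w) = L2_set (\<lambda>i. v $ i + w $ i) {..<dim_vec w}"
    unfolding vnorm_L2 by (rule L2_set_cong) (use assms in auto)
  also have "\<dots> \<le> L2_set (\<lambda>i. v $ i) {..<dim_vec w} + L2_set (\<lambda>i. w $ i) {..<dim_vec w}"
    by (rule L2_set_triangle_ineq)
  finally show ?thesis using assms by (simp add: vnorm_L2)
qed

lemma vnorm_smult: "vnorm (c \<cdot>\<^sub>v v) = \<bar>c\<bar> * vnorm v"
proof -
  have "vnorm (c \<cdot>\<^sub>v v) = sqrt (c^2 * (\<Sum>i<dim_vec v. (v$i)^2))"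
    unfolding vnorm_def by (simp add: power_mult_distrib sum_distrib_left)
  thus ?thesis unfolding vnorm_def by (simp add: real_sqrt_mult)
qed

lemma vnorm_eq0: "vnorm v = 0 \<Longrightarrow> v = 0\<^sub>v (dim_vec v)"
  unfolding vnorm_def by (auto simp: sum_nonneg_eq_0_iff intro!: eq_vecI)

lemma vnorm_add_sq: assumes "dim_vec v = dim_vec w"
  shows "(vnorm (v + w))^2 = (vnorm v)^2 + 2 * (v \<bullet> w) + (vnorm w)^2"
  using assms unfolding vnorm_sq' scalar_prod_def
  by (simp add: power2_sum sum.distrib sum_distrib_left atLeast0LessThan mult.assoc)

lemma vnorm_minus_sq: assumes "dim_vec v = dim_vec w"
  shows "(vnorm (v - w))^2 = (vnorm v)^2 - 2 * (v \<bullet> w) + (vnorm w)^2"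
  using assms unfolding vnorm_sq' scalar_prod_def
  by (simp add: power2_diff sum.distrib sum_subtractf sum_distrib_left atLeast0LessThan mult.assoc)

definition op_bounded :: "real mat \<Rightarrow> real \<Rightarrow> bool" where
  "op_bounded K c \<longleftrightarrow> (\<forall>v \<in> carrier_vec (dim_col K). vnorm (K *\<^sub>v v) \<le> c * vnorm v)"

lemma op_boundedD: "op_bounded K c \<Longrightarrow> v \<in> carrier_vec (dim_col K) \<Longrightarrow> vnorm (K *\<^sub>v v) \<le> c * vnorm v"
  unfolding op_bounded_def by auto

lemma fnorm_cols: "(fnorm M)^2 = (\<Sum>j<dim_col M. (vnorm (col M j))^2)"
proof -
  have "(fnorm M)^2 = (\<Sum>i<dim_row M. \<Sum>j<dim_col M. (M $$ (i,j))^2)"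
    unfolding fnorm_def by (simp add: sum_nonneg)
  also have "\<dots> = (\<Sum>j<dim_col M. \<Sum>i<dim_row M. (M $$ (i,j))^2)" by (rule sum.swap)
  also have "\<dots> = (\<Sum>j<dim_col M. (vnorm (col M j))^2)"
    by (rule sum.cong, simp, subst vnorm_sq', auto)
  finally show ?thesis .
qed

lemma fnorm_nonneg[simp]: "0 \<le> fnorm M"
  unfolding fnorm_def by (simp add: sum_nonneg)

lemma fnorm_transpose: "fnorm (transpose_mat M) = fnorm M"
  unfolding fnorm_def by (simp, subst sum.swap, simp)

lemma fnorm_mult_left:
  assumes K: "K \<in> carrier_mat n m" and B: "B \<in> carrier_mat m q" and o: "op_bounded K c" and c: "0 \<le> c"
  shows "fnorm (K * B) \<le> c * fnorm B"
proof -
  have "(fnorm (K * B))^2 = (\<Sum>j<q. (vnorm (K *\<^sub>v col B j))^2)"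
    unfolding fnorm_cols using K B by (auto intro!: sum.cong simp del: col_mult simp: col_mult2[OF K B])
  also have "\<dots> \<le> (\<Sum>j<q. (c * vnorm (col B j))^2)"
    apply (rule sum_mono) apply (rule power_mono) using K B
    by (auto intro!: op_boundedD[OF o])
  also have "\<dots> = c^2 * (fnorm B)^2" unfolding fnorm_cols using B
    by (simp add: power_mult_distrib sum_distrib_left)
  also have "\<dots> = (c * fnorm B)^2" by (simp add: power_mult_distrib)
  finally show ?thesis using c by (meson fnorm_nonneg mult_nonneg_nonneg power2_le_imp_le)
qed

lemma op_bounded_transpose:
  assumes K: "K \<in> carrier_mat n m" and o: "op_bounded K c" and c: "0 \<le> c"
  shows "op_bounded (transpose_mat K) c"
  unfolding op_bounded_def
proof
  fix y :: "real vec" assume "y \<in> carrier_vec (dim_col (transpose_mat K))"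
  hence y: "y \<in> carrier_vec n" using K by simp
  let ?z = "transpose_mat K *\<^sub>v y"
  have z: "?z \<in> carrier_vec m" using K y by simp
  have "(vnorm ?z)^2 = ?z \<bullet> ?z" by (rule vnorm_sq)
  also have "\<dots> = y \<bullet> (K *\<^sub>v ?z)" by (rule transpose_vec_mult_scalar[OF K z y])
  also have "\<dots> \<le> vnorm y * vnorm (K *\<^sub>v ?z)"
    using vnorm_cauchy_schwarz[of y "K *\<^sub>v ?z"] y K by auto
  also have "\<dots> \<le> vnorm y * (c * vnorm ?z)"
    by (rule mult_left_mono[OF op_boundedD[OF o]]) (use z K in auto)
  finally have "(vnorm ?z)^2 \<le> c * vnorm y * vnorm ?z" by (simp add: ac_simps)
  hence "vnorm ?z * vnorm ?z \<le> (c * vnorm y) * vnorm ?z" by (simp add: power2_eq_square ac_simps)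
  thus "vnorm ?z \<le> c * vnorm y"
    using vnorm_nonneg[of ?z] c by (cases "vnorm ?z = 0") (auto simp: mult_le_cancel_right)
qed

lemma fnorm_mult_right:
  assumes B: "B \<in> carrier_mat n m" and K: "K \<in> carrier_mat m q" and o: "op_bounded K c" and c: "0 \<le> c"
  shows "fnorm (B * K) \<le> fnorm B * c"
proof -
  have "fnorm (B * K) = fnorm (transpose_mat K * transpose_mat B)"
    by (subst fnorm_transpose[symmetric], subst transpose_mult[OF B K], simp)
  also have "\<dots> \<le> c * fnorm (transpose_mat B)"
    by (rule fnorm_mult_left[OF _ _ op_bounded_transpose[OF K o c] c]) (use K B in auto)
  finally show ?thesis by (simp add: fnorm_transpose mult.commute)
qed

lemma op_bounded_fnorm:
  assumes K: "K \<in> carrier_mat n m"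
  shows "op_bounded K (fnorm K)"
  unfolding op_bounded_def
proof
  fix v :: "real vec" assume "v \<in> carrier_vec (dim_col K)"
  hence v: "v \<in> carrier_vec m" using K by simp
  have "(vnorm (K *\<^sub>v v))^2 = (\<Sum>i<n. (row K i \<bullet> v)^2)"
    unfolding vnorm_sq' using K by simp
  also have "\<dots> \<le> (\<Sum>i<n. (vnorm (row K i))^2 * (vnorm v)^2)"
  proof (rule sum_mono)
    fix i assume "i \<in> {..<n}"
    have "\<bar>row K i \<bullet> v\<bar> \<le> vnorm (row K i) * vnorm v"
      by (rule vnorm_cauchy_schwarz) (use K v in auto)
    hence "\<bar>row K i \<bullet> v\<bar>^2 \<le> (vnorm (row K i) * vnorm v)^2"
      by (rule power_mono) simp
    thus "(row K i \<bullet> v)^2 \<le> (vnorm (row K i))^2 * (vnorm v)^2" by (simp add: power_mult_distrib)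
  qed
  also have "\<dots> = (fnorm K * vnorm v)^2"
    unfolding power_mult_distrib sum_distrib_right[symmetric]
    by (subst fnorm_transpose[symmetric], subst fnorm_cols, use K in \<open>auto intro!: sum.cong\<close>)
  finally show "vnorm (K *\<^sub>v v) \<le> fnorm K * vnorm v"
    by (meson fnorm_nonneg vnorm_nonneg mult_nonneg_nonneg power2_le_imp_le)
qed

lemma op_bounded_mult:
  assumes K: "K \<in> carrier_mat n m" and L: "L \<in> carrier_mat m q"
    and "op_bounded K a" "op_bounded L b" "0 \<le> a"
  shows "op_bounded (K * L) (a * b)"
  unfolding op_bounded_def
proof
  fix v :: "real vec" assume "v \<in> carrier_vec (dim_col (K * L))"
  hence v: "v \<in> carrier_vec q" using L by simp
  have "vnorm ((K * L) *\<^sub>v v) = vnorm (K *\<^sub>v (L *\<^sub>v v))" using K L v by simp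
  also have "\<dots> \<le> a * vnorm (L *\<^sub>v v)" by (rule op_boundedD[OF assms(3)]) (use L K v in auto)
  also have "\<dots> \<le> a * (b * vnorm v)" by (rule mult_left_mono[OF op_boundedD[OF assms(4)]]) (use L v assms in auto)
  finally show "vnorm ((K * L) *\<^sub>v v) \<le> a * b * vnorm v" by simp
qed

lemma fnorm_L2cols: "fnorm M = L2_set (\<lambda>j. vnorm (col M j)) {..<dim_col M}"
  unfolding L2_set_def fnorm_cols[symmetric] by simp

lemma fnorm_add_le:
  assumes "A \<in> carrier_mat n m" "B \<in> carrier_mat n m"
  shows "fnorm (A + B) \<le> fnorm A + fnorm B"
proof -
  have "fnorm (A + B) = L2_set (\<lambda>j. vnorm (col A j + col B j)) {..<m}"
    unfolding fnorm_L2cols using assms by (auto intro!: L2_set_cong)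
  also have "\<dots> \<le> L2_set (\<lambda>j. vnorm (col A j) + vnorm (col B j)) {..<m}"
    by (rule L2_set_mono) (use assms in \<open>auto intro!: vnorm_add_le\<close>)
  also have "\<dots> \<le> L2_set (\<lambda>j. vnorm (col A j)) {..<m} + L2_set (\<lambda>j. vnorm (col B j)) {..<m}"
    by (rule L2_set_triangle_ineq)
  also have "\<dots> = fnorm A + fnorm B"
    unfolding fnorm_L2cols using assms by simp
  finally show ?thesis .
qed

lemma fnorm_smult: "fnorm (c \<cdot>\<^sub>m A) = \<bar>c\<bar> * fnorm A"
proof -
  have "fnorm (c \<cdot>\<^sub>m A) = sqrt (c^2 * (\<Sum>i<dim_row A. \<Sum>j<dim_col A. (A $$ (i,j))^2))"
    unfolding fnorm_def by (simp add: power_mult_distrib sum_distrib_left)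
  thus ?thesis unfolding fnorm_def by (simp add: real_sqrt_mult)
qed

lemma fnorm_mult_mult_le_left:
  assumes P: "P \<in> carrier_mat n k" and Q: "Q \<in> carrier_mat k l" and R: "R \<in> carrier_mat l m"
    and oQ: "op_bounded Q b" and oR: "op_bounded R c" and b: "0 \<le> b" and c: "0 \<le> c"
  shows "fnorm (P * Q * R) \<le> fnorm P * b * c"
proof -
  have "fnorm (P * Q * R) \<le> fnorm (P * Q) * c" by (rule fnorm_mult_right[OF mult_carrier_mat[OF P Q] R oR c])
  also have "\<dots> \<le> fnorm P * b * c" by (rule mult_right_mono[OF fnorm_mult_right[OF P Q oQ b] c])
  finally show ?thesis .
qed

lemma fnorm_mult_mult_le_mid:
  assumes P: "P \<in> carrier_mat n k" and Q: "Q \<in> carrier_mat k l" and R: "R \<in> carrier_mat l m"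
    and oP: "op_bounded P a" and oR: "op_bounded R c" and a: "0 \<le> a" and c: "0 \<le> c"
  shows "fnorm (P * Q * R) \<le> a * fnorm Q * c"
proof -
  have "fnorm (P * Q * R) \<le> fnorm (P * Q) * c" by (rule fnorm_mult_right[OF mult_carrier_mat[OF P Q] R oR c])
  also have "\<dots> \<le> a * fnorm Q * c" by (rule mult_right_mono[OF fnorm_mult_left[OF P Q oP a] c])
  finally show ?thesis .
qed

lemma op_bounded_Ipr: "op_bounded (Ipr p r) 1"
  unfolding op_bounded_def
proof
  fix v :: "real vec" assume "v \<in> carrier_vec (dim_col (Ipr p r))"
  hence v: "v \<in> carrier_vec r" by (simp add: Ipr_def)
  have e: "(Ipr p r *\<^sub>v v) $ i = (if i < r then v $ i else 0)" if "i < p" for i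
  proof -
    have "(Ipr p r *\<^sub>v v) $ i = (\<Sum>k<r. (if i = k then 1 else 0) * v $ k)"
      using that v by (simp add: Ipr_def scalar_prod_def atLeast0LessThan)
    also have "\<dots> = (\<Sum>k<r. if k = i then v $ k else 0)" by (rule sum.cong) auto
    also have "\<dots> = (if i < r then v $ i else 0)" by (simp add: sum.delta')
    finally show ?thesis .
  qed
  have "(vnorm (Ipr p r *\<^sub>v v))^2 = (\<Sum>i<p. (if i < r then v $ i else 0)^2)"
  proof -
    have dimI: "dim_vec (Ipr p r *\<^sub>v v) = p" by (simp add: Ipr_def)
    show ?thesis unfolding vnorm_sq' dimI
      by (rule sum.cong[OF refl]) (subst e, auto)
  qed
  also have "\<dots> = (\<Sum>i\<in>{..<p} \<inter> {..<r}. (v $ i)^2)"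
    by (simp add: sum.inter_restrict if_distrib[of "\<lambda>x. x^2"] cong: if_cong)
  also have "\<dots> \<le> (\<Sum>i<r. (v $ i)^2)" by (rule sum_mono2) auto
  also have "\<dots> = (vnorm v)^2" using v by (simp add: vnorm_sq')
  finally show "vnorm (Ipr p r *\<^sub>v v) \<le> 1 * vnorm v" using power2_le_imp_le by simp
qed

lemma op_bounded_if_unit_bounded:
  assumes unit: "\<And>x. x \<in> carrier_vec (dim_col M) \<Longrightarrow> vnorm x = 1 \<Longrightarrow> vnorm (M *\<^sub>v x) \<le> c"
  shows "op_bounded M c"
  unfolding op_bounded_def
proof
  fix v :: "real vec" assume v: "v \<in> carrier_vec (dim_col M)"
  show "vnorm (M *\<^sub>v v) \<le> c * vnorm v"
  proof (cases "vnorm v = 0")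
    case True
    hence "v = 0\<^sub>v (dim_col M)" using vnorm_eq0[of v] v by simp
    hence "M *\<^sub>v v = 0\<^sub>v (dim_row M)" by (intro eq_vecI) (auto simp: scalar_prod_def)
    thus ?thesis using True by (simp add: vnorm_def)
  next
    case False
    hence pos: "0 < vnorm v" using vnorm_nonneg[of v] by linarith
    let ?x = "(1 / vnorm v) \<cdot>\<^sub>v v"
    have "M *\<^sub>v ?x = (1 / vnorm v) \<cdot>\<^sub>v (M *\<^sub>v v)" using mult_mat_vec[OF carrier_matI v] by simp
    hence "vnorm (M *\<^sub>v v) / vnorm v \<le> c"
      using unit[of ?x] v pos by (simp add: vnorm_smult)
    thus ?thesis using pos by (simp add: divide_le_eq mult.commute)
  qed
qed

lemma vnorm_unit_vec: "i < n \<Longrightarrow> vnorm (unit_vec n i) = 1"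
  unfolding vnorm_def by (simp add: if_distrib[of "\<lambda>x. x\<^sup>2"] sum.delta cong: if_cong)

lemma snorm_op_bounded:
  assumes M: "M \<in> carrier_mat n n" and n: "0 < n"
  shows "op_bounded M (snorm M)" "0 \<le> snorm M"
proof -
  let ?S = "{vnorm (M *\<^sub>v x) | x. x \<in> carrier_vec (dim_col M) \<and> vnorm x = 1}"
  have bdd: "bdd_above ?S"
    using op_boundedD[OF op_bounded_fnorm[OF M]] by (intro bdd_aboveI[of _ "fnorm M"]) fastforce
  have unit: "vnorm (M *\<^sub>v x) \<le> snorm M" if "x \<in> carrier_vec (dim_col M)" "vnorm x = 1" for x
    unfolding snorm_def by (rule cSup_upper[OF _ bdd]) (use that in blast)
  show "op_bounded M (snorm M)" by (rule op_bounded_if_unit_bounded[OF unit])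
  have "vnorm (M *\<^sub>v unit_vec n 0) \<le> snorm M" using unit vnorm_unit_vec[OF n] M by simp
  then show "0 \<le> snorm M" by (rule order_trans[OF vnorm_nonneg])
qed

(* Variants of the library rules whose side conditions are equations between dimensions
   rather than carrier memberships, so that simp can discharge them while rewriting. *)

declare minus_carrier_mat[simp] uminus_carrier_mat[simp]

lemma mult_assoc_dims: "dim_col (A::real mat) = dim_row B \<Longrightarrow> dim_col B = dim_row C \<Longrightarrow> A * B * C = A * (B * C)"
  by (rule assoc_mult_mat[of A "dim_row A" "dim_col A" B "dim_col B" C "dim_col C"]) (auto intro!: carrier_matI)

lemma mult_add_distrib_dims: "dim_col (A::real mat) = dim_row B \<Longrightarrow> dim_row B = dim_row C \<Longrightarrow> dim_col B = dim_col C \<Longrightarrow> A * (B + C) = A * B + A * C"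
  by (rule mult_add_distrib_mat[of A "dim_row A" "dim_col A" B "dim_col B" C]) (auto intro!: carrier_matI)

lemma add_mult_distrib_dims: "dim_row (A::real mat) = dim_row B \<Longrightarrow> dim_col A = dim_col B \<Longrightarrow> dim_col A = dim_row C \<Longrightarrow> (A + B) * C = A * C + B * C"
  by (rule add_mult_distrib_mat[of A "dim_row A" "dim_col A" B C "dim_col C"]) (auto intro!: carrier_matI)

lemma mult_minus_distrib_dims: "dim_col (A::real mat) = dim_row B \<Longrightarrow> dim_row B = dim_row C \<Longrightarrow> dim_col B = dim_col C \<Longrightarrow> A * (B - C) = A * B - A * C"
  by (rule mult_minus_distrib_mat[of A "dim_row A" "dim_col A" B "dim_col B" C]) (auto intro!: carrier_matI)

lemma minus_mult_distrib_dims: "dim_row (A::real mat) = dim_row B \<Longrightarrow> dim_col A = dim_col B \<Longrightarrow> dim_col A = dim_row C \<Longrightarrow> (A - B) * C = A * C - B * C"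
  by (rule minus_mult_distrib_mat[of A "dim_row A" "dim_col A" B C "dim_col C"]) (auto intro!: carrier_matI)

lemma smult_mult_dims: "dim_col (A::real mat) = dim_row B \<Longrightarrow> (c \<cdot>\<^sub>m A) * B = c \<cdot>\<^sub>m (A * B)"
  by (rule eq_matI) (auto simp: scalar_prod_def sum_distrib_left ac_simps intro!: sum.cong)

lemma mult_smult_dims: "dim_col (A::real mat) = dim_row B \<Longrightarrow> A * (c \<cdot>\<^sub>m B) = c \<cdot>\<^sub>m (A * B)"
  by (rule eq_matI) (auto simp: scalar_prod_def sum_distrib_left ac_simps intro!: sum.cong)

lemma transpose_mult_dims: "dim_col (A::real mat) = dim_row B \<Longrightarrow> transpose_mat (A * B) = transpose_mat B * transpose_mat A"
  by (rule transpose_mult[of A "dim_row A" "dim_col A" B "dim_col B"]) (auto intro!: carrier_matI)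

lemma transpose_add_dims: "dim_row (A::real mat) = dim_row B \<Longrightarrow> dim_col A = dim_col B \<Longrightarrow> transpose_mat (A + B) = transpose_mat A + transpose_mat B"
  by (rule transpose_add[of A "dim_row A" "dim_col A"]) (auto intro!: carrier_matI)

lemma transpose_minus_dims: "dim_row (A::real mat) = dim_row B \<Longrightarrow> dim_col A = dim_col B \<Longrightarrow> transpose_mat (A - B) = transpose_mat A - transpose_mat B"
  by (rule transpose_minus[of A "dim_row A" "dim_col A"]) (auto intro!: carrier_matI)

lemma transpose_smult: "transpose_mat (c \<cdot>\<^sub>m (A::real mat)) = c \<cdot>\<^sub>m transpose_mat A"
  by (rule eq_matI) auto

lemmas index_mat_rules = index_add_mat index_minus_mat index_smult_mat index_uminus_mat
  index_mult_mat(2,3) index_transpose_mat(2,3)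

lemmas mat_normalize_rules = mult_assoc_dims mult_add_distrib_dims add_mult_distrib_dims
  mult_minus_distrib_dims minus_mult_distrib_dims smult_mult_dims mult_smult_dims
  transpose_mult_dims transpose_add_dims transpose_minus_dims transpose_smult transpose_uminus
  transpose_transpose

section \<open>Skew-symmetric matrices and the Cayley transform\<close>

definition skew :: "nat \<Rightarrow> real mat \<Rightarrow> bool" where
  "skew n X \<longleftrightarrow> X \<in> carrier_mat n n \<and> transpose_mat X = - X"

lemma skew_inner:
  assumes "skew n X" and y: "y \<in> carrier_vec n"
  shows "y \<bullet> (X *\<^sub>v y) = 0"
proof -
  have X: "X \<in> carrier_mat n n" and T: "transpose_mat X = - X" using assms unfolding skew_def by auto
  have "(transpose_mat X *\<^sub>v y) \<bullet> y = y \<bullet> (X *\<^sub>v y)" by (rule transpose_vec_mult_scalar[OF X y y])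
  moreover have "transpose_mat X *\<^sub>v y = - (X *\<^sub>v y)" unfolding T using X y by simp
  moreover have "(- (X *\<^sub>v y)) \<bullet> y = - ((X *\<^sub>v y) \<bullet> y)" using X y by simp
  moreover have "(X *\<^sub>v y) \<bullet> y = y \<bullet> (X *\<^sub>v y)" by (rule comm_scalar_prod) (use X y in auto)
  ultimately show ?thesis by simp
qed

lemma skew_norm_minus:
  assumes "skew n X" and y: "y \<in> carrier_vec n"
  shows "(vnorm ((1\<^sub>m n - X) *\<^sub>v y))^2 = (vnorm y)^2 + (vnorm (X *\<^sub>v y))^2"
proof -
  have X: "X \<in> carrier_mat n n" using assms unfolding skew_def by auto
  have "(1\<^sub>m n - X) *\<^sub>v y = y - X *\<^sub>v y" using X y by (simp add: minus_mult_distrib_mat_vec[of "1\<^sub>m n" n n X y])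
  thus ?thesis using vnorm_minus_sq[of y "X *\<^sub>v y"] skew_inner[OF assms] X y by simp
qed

lemma skew_norm_plus:
  assumes "skew n X" and y: "y \<in> carrier_vec n"
  shows "(vnorm ((1\<^sub>m n + X) *\<^sub>v y))^2 = (vnorm y)^2 + (vnorm (X *\<^sub>v y))^2"
proof -
  have X: "X \<in> carrier_mat n n" using assms unfolding skew_def by auto
  have "(1\<^sub>m n + X) *\<^sub>v y = y + X *\<^sub>v y" using X y by (simp add: add_mult_distrib_mat_vec[of "1\<^sub>m n" n n X y])
  thus ?thesis using vnorm_add_sq[of y "X *\<^sub>v y"] skew_inner[OF assms] X y by simp
qed

lemma skew_det:
  assumes "skew n X"
  shows "det (1\<^sub>m n - X) \<noteq> 0"
proof
  have X: "X \<in> carrier_mat n n" using assms unfolding skew_def by auto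
  assume "det (1\<^sub>m n - X) = 0"
  then obtain v where v: "v \<in> carrier_vec n" "v \<noteq> 0\<^sub>v n" "(1\<^sub>m n - X) *\<^sub>v v = 0\<^sub>v n"
    using det_0_iff_vec_prod_zero_field[of "1\<^sub>m n - X" n] X by force
  have "(vnorm v)^2 + (vnorm (X *\<^sub>v v))^2 = 0"
    using skew_norm_minus[OF assms v(1)] v(3) by (simp add: vnorm_def)
  hence "vnorm v = 0" by (simp add: sum_power2_eq_zero_iff)
  thus False using vnorm_eq0[of v] v by auto
qed

lemma skew_minv:
  assumes "skew n X"
  shows "minv (1\<^sub>m n - X) \<in> carrier_mat n n"
    "(1\<^sub>m n - X) * minv (1\<^sub>m n - X) = 1\<^sub>m n"
    "minv (1\<^sub>m n - X) * (1\<^sub>m n - X) = 1\<^sub>m n"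
proof -
  have X: "X \<in> carrier_mat n n" using assms unfolding skew_def by auto
  have IX: "1\<^sub>m n - X \<in> carrier_mat n n" using X by simp
  from det_non_zero_imp_unit[OF IX skew_det[OF assms], of "()"]
  obtain B where "B \<in> carrier_mat n n" "B * (1\<^sub>m n - X) = 1\<^sub>m n" "(1\<^sub>m n - X) * B = 1\<^sub>m n"
    unfolding Units_def ring_mat_def by auto
  hence ex: "\<exists>B. B \<in> carrier_mat (dim_row (1\<^sub>m n - X)) (dim_row (1\<^sub>m n - X)) \<and>
      (1\<^sub>m n - X) * B = 1\<^sub>m (dim_row (1\<^sub>m n - X)) \<and> B * (1\<^sub>m n - X) = 1\<^sub>m (dim_row (1\<^sub>m n - X))"
    using X by auto
  from someI_ex[OF ex] X
  show "minv (1\<^sub>m n - X) \<in> carrier_mat n n"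
    "(1\<^sub>m n - X) * minv (1\<^sub>m n - X) = 1\<^sub>m n"
    "minv (1\<^sub>m n - X) * (1\<^sub>m n - X) = 1\<^sub>m n" unfolding minv_def by auto
qed

lemma skew_resolvent_contraction:
  assumes "skew n X"
  shows "op_bounded (minv (1\<^sub>m n - X)) 1"
  unfolding op_bounded_def
proof
  let ?C = "minv (1\<^sub>m n - X)"
  have X: "X \<in> carrier_mat n n" using assms unfolding skew_def by auto
  note C = skew_minv[OF assms]
  fix v :: "real vec" assume "v \<in> carrier_vec (dim_col ?C)"
  hence v: "v \<in> carrier_vec n" using C by simp
  have y: "?C *\<^sub>v v \<in> carrier_vec n" using C v by simp
  have "(1\<^sub>m n - X) *\<^sub>v (?C *\<^sub>v v) = ((1\<^sub>m n - X) * ?C) *\<^sub>v v"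
    by (rule assoc_mult_mat_vec[symmetric]) (use C X v in auto)
  hence "(1\<^sub>m n - X) *\<^sub>v (?C *\<^sub>v v) = v" using C(2) v by simp
  hence "(vnorm v)^2 = (vnorm (?C *\<^sub>v v))^2 + (vnorm (X *\<^sub>v (?C *\<^sub>v v)))^2"
    using skew_norm_minus[OF assms y] by simp
  hence "(vnorm (?C *\<^sub>v v))^2 \<le> (vnorm v)^2" by simp
  thus "vnorm (?C *\<^sub>v v) \<le> 1 * vnorm v" using power2_le_imp_le by simp
qed

lemma skew_cayley_contraction:
  assumes "skew n X"
  shows "op_bounded ((1\<^sub>m n + X) * minv (1\<^sub>m n - X)) 1"
  unfolding op_bounded_def
proof
  let ?C = "minv (1\<^sub>m n - X)"
  have X: "X \<in> carrier_mat n n" using assms unfolding skew_def by auto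
  note C = skew_minv[OF assms]
  fix v :: "real vec" assume "v \<in> carrier_vec (dim_col ((1\<^sub>m n + X) * ?C))"
  hence v: "v \<in> carrier_vec n" using C by simp
  have y: "?C *\<^sub>v v \<in> carrier_vec n" using C v by simp
  have "(1\<^sub>m n - X) *\<^sub>v (?C *\<^sub>v v) = ((1\<^sub>m n - X) * ?C) *\<^sub>v v"
    by (rule assoc_mult_mat_vec[symmetric]) (use C X v in auto)
  hence "(1\<^sub>m n - X) *\<^sub>v (?C *\<^sub>v v) = v" using C(2) v by simp
  hence "(vnorm v)^2 = (vnorm (?C *\<^sub>v v))^2 + (vnorm (X *\<^sub>v (?C *\<^sub>v v)))^2"
    using skew_norm_minus[OF assms y] by simp
  moreover have "((1\<^sub>m n + X) * ?C) *\<^sub>v v = (1\<^sub>m n + X) *\<^sub>v (?C *\<^sub>v v)"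
    by (rule assoc_mult_mat_vec) (use C X v in auto)
  ultimately have "(vnorm (((1\<^sub>m n + X) * ?C) *\<^sub>v v))^2 = (vnorm v)^2"
    using skew_norm_plus[OF assms y] by simp
  thus "vnorm (((1\<^sub>m n + X) * ?C) *\<^sub>v v) \<le> 1 * vnorm v" using power2_le_imp_le by simp
qed

lemma skew_resolvent_transpose:
  assumes "skew n X"
  shows "transpose_mat (minv (1\<^sub>m n - X)) * (1\<^sub>m n + X) = 1\<^sub>m n"
    "(1\<^sub>m n + X) * transpose_mat (minv (1\<^sub>m n - X)) = 1\<^sub>m n"
proof -
  let ?C = "minv (1\<^sub>m n - X)"
  have X: "X \<in> carrier_mat n n" and T: "transpose_mat X = - X" using assms unfolding skew_def by auto
  note C = skew_minv[OF assms]
  have "transpose_mat (1\<^sub>m n - X) = transpose_mat (1\<^sub>m n) - transpose_mat X"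
    by (rule transpose_minus) (use X in auto)
  also have "\<dots> = 1\<^sub>m n + X" unfolding T transpose_one by (intro eq_matI) (use X in auto)
  finally have tr: "transpose_mat (1\<^sub>m n - X) = 1\<^sub>m n + X" .
  have "1\<^sub>m n = transpose_mat ((1\<^sub>m n - X) * ?C)" using C by simp
  also have "\<dots> = transpose_mat ?C * transpose_mat (1\<^sub>m n - X)"
    by (rule transpose_mult) (use C X in auto)
  finally show "transpose_mat ?C * (1\<^sub>m n + X) = 1\<^sub>m n" unfolding tr by simp
  have "1\<^sub>m n = transpose_mat (?C * (1\<^sub>m n - X))" using C by simp
  also have "\<dots> = transpose_mat (1\<^sub>m n - X) * transpose_mat ?C"
    by (rule transpose_mult) (use C X in auto)
  finally show "(1\<^sub>m n + X) * transpose_mat ?C = 1\<^sub>m n" unfolding tr by simp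
qed

lemma skew_cayley_eq:
  assumes X: "skew p X"
  shows "(1\<^sub>m p + X) * minv (1\<^sub>m p - X) = 2 \<cdot>\<^sub>m minv (1\<^sub>m p - X) - 1\<^sub>m p"
proof -
  let ?C = "minv (1\<^sub>m p - X)"
  have Xc: "X \<in> carrier_mat p p" using X unfolding skew_def by auto
  note C = skew_minv[OF X]
  have d: "dim_row X = p" "dim_col X = p" "dim_row ?C = p" "dim_col ?C = p" using Xc C by auto
  have h: "?C - X * ?C = 1\<^sub>m p" using C(2) minus_mult_distrib_dims[of "1\<^sub>m p" X ?C] d left_mult_one_mat'[of ?C p] by simp
  have "(1\<^sub>m p + X) * ?C = ?C + X * ?C" using add_mult_distrib_dims[of "1\<^sub>m p" X ?C] d left_mult_one_mat'[of ?C p] by simp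
  also have "\<dots> = 2 \<cdot>\<^sub>m ?C - 1\<^sub>m p"
  proof (rule eq_matI)
    fix i j assume ij: "i < dim_row (2 \<cdot>\<^sub>m ?C - 1\<^sub>m p)" "j < dim_col (2 \<cdot>\<^sub>m ?C - 1\<^sub>m p)"
    hence ij': "i < p" "j < p" by auto
    have "(?C - X * ?C) $$ (i,j) = 1\<^sub>m p $$ (i,j)" using h by simp
    hence "?C $$ (i,j) - (X * ?C) $$ (i,j) = 1\<^sub>m p $$ (i,j)" using ij' d by (simp only: index_mat_rules index_one_mat(2,3) d)
    thus "(?C + X * ?C) $$ (i,j) = (2 \<cdot>\<^sub>m ?C - 1\<^sub>m p) $$ (i,j)"
      using ij' d by (simp only: index_mat_rules index_one_mat(2,3) d)
  qed (use d in auto)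
  finally show ?thesis .
qed

lemma resolvent_identity:
  fixes C C0 X X0 :: "real mat"
  assumes c: "C \<in> carrier_mat p p" "C0 \<in> carrier_mat p p" "X \<in> carrier_mat p p" "X0 \<in> carrier_mat p p"
    and h1: "C * (1\<^sub>m p - X) = 1\<^sub>m p" and h2: "(1\<^sub>m p - X0) * C0 = 1\<^sub>m p"
  shows "C - C0 = C * (X - X0) * C0"
proof -
  have d: "dim_row C = p" "dim_col C = p" "dim_row C0 = p" "dim_col C0 = p" "dim_row X = p" "dim_col X = p"
    "dim_row X0 = p" "dim_col X0 = p" using c by auto
  have "X - X0 = (1\<^sub>m p - X0) - (1\<^sub>m p - X)" by (rule eq_matI) (use d in auto)
  hence "C * (X - X0) * C0 = (C * (1\<^sub>m p - X0) - C * (1\<^sub>m p - X)) * C0"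
    using mult_minus_distrib_dims[of C "1\<^sub>m p - X0" "1\<^sub>m p - X"] d by simp
  also have "\<dots> = C * (1\<^sub>m p - X0) * C0 - C * (1\<^sub>m p - X) * C0"
    by (rule minus_mult_distrib_dims) (use d in auto)
  also have "C * (1\<^sub>m p - X0) * C0 = C * ((1\<^sub>m p - X0) * C0)" by (rule mult_assoc_dims) (use d in auto)
  also have "\<dots> = C" using h2 right_mult_one_mat'[of C p] d by simp
  also have "C * (1\<^sub>m p - X) * C0 = C0" using h1 left_mult_one_mat'[of C0 p] d by simp
  finally show ?thesis by simp
qed

lemma skew_diff:
  assumes "skew n X" and "skew n Y"
  shows "skew n (X - Y)"
  using assms unfolding skew_def by (auto simp: transpose_minus_dims)

lemma skew_cayley_diff:
  assumes X: "skew p X" and X0: "skew p X0"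
  shows "(1\<^sub>m p + X) * minv (1\<^sub>m p - X) - (1\<^sub>m p + X0) * minv (1\<^sub>m p - X0)
    = 2 \<cdot>\<^sub>m (minv (1\<^sub>m p - X) * (X - X0) * minv (1\<^sub>m p - X0))"
proof -
  let ?C = "minv (1\<^sub>m p - X)" and ?D = "minv (1\<^sub>m p - X0)"
  have Xc: "X \<in> carrier_mat p p" and X0c: "X0 \<in> carrier_mat p p" using X X0 unfolding skew_def by auto
  note C = skew_minv[OF X] and C0 = skew_minv[OF X0]
  have "?C - ?D = ?C * (X - X0) * ?D"
    by (rule resolvent_identity[OF C(1) C0(1) Xc X0c C(3) C0(2)])
  moreover have "(2 \<cdot>\<^sub>m ?C - 1\<^sub>m p) - (2 \<cdot>\<^sub>m ?D - 1\<^sub>m p) = 2 \<cdot>\<^sub>m (?C - ?D)"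
    by (rule eq_matI) (use C(1) C0(1) in \<open>auto simp: algebra_simps\<close>)
  ultimately show ?thesis unfolding skew_cayley_eq[OF X] skew_cayley_eq[OF X0] by simp
qed

lemma skew_resolvent_transpose_cayley:
  assumes X: "skew p X"
  shows "transpose_mat (minv (1\<^sub>m p - X)) * ((1\<^sub>m p + X) * minv (1\<^sub>m p - X)) = minv (1\<^sub>m p - X)"
proof -
  have Xc: "X \<in> carrier_mat p p" using X unfolding skew_def by auto
  note C = skew_minv[OF X]
  have "transpose_mat (minv (1\<^sub>m p - X)) * ((1\<^sub>m p + X) * minv (1\<^sub>m p - X))
      = (transpose_mat (minv (1\<^sub>m p - X)) * (1\<^sub>m p + X)) * minv (1\<^sub>m p - X)"
    by (rule mult_assoc_dims[symmetric]) (use C(1) Xc in auto)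
  also have "\<dots> = minv (1\<^sub>m p - X)" using skew_resolvent_transpose(1)[OF X] C(1) by simp
  finally show ?thesis .
qed

lemma cayley_factor_carrier:
  assumes "skew p X" and "E \<in> carrier_mat p r"
  shows "(1\<^sub>m p + X) * minv (1\<^sub>m p - X) * E \<in> carrier_mat p r"
  using assms skew_minv[OF assms(1)] unfolding skew_def by auto

lemma cayley_factor_contraction:
  assumes X: "skew p X" and E: "E \<in> carrier_mat p r" and oE: "op_bounded E 1"
  shows "op_bounded ((1\<^sub>m p + X) * minv (1\<^sub>m p - X) * E) 1"
proof -
  have "(1\<^sub>m p + X) * minv (1\<^sub>m p - X) \<in> carrier_mat p p"
    using X skew_minv[OF X] unfolding skew_def by auto
  from op_bounded_mult[OF this E skew_cayley_contraction[OF X] oE] show ?thesis by simp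
qed

lemma cayley_factor_expansion:
  fixes X X0 E :: "real mat"
  assumes X: "skew p X" and X0: "skew p X0" and E: "E \<in> carrier_mat p r"
  defines "C \<equiv> minv (1\<^sub>m p - X)" and "C0 \<equiv> minv (1\<^sub>m p - X0)" and "dX \<equiv> X - X0"
  defines "U \<equiv> (1\<^sub>m p + X) * C * E" and "U0 \<equiv> (1\<^sub>m p + X0) * C0 * E"
  shows "U - U0 = 2 \<cdot>\<^sub>m (C * dX * C0 * E)"
    and "U - U0 - 2 \<cdot>\<^sub>m (C0 * dX * (C0 * E)) = 2 \<cdot>\<^sub>m ((C * dX * C0) * (dX * (C0 * E)))"
proof -
  have Xc: "X \<in> carrier_mat p p" and X0c: "X0 \<in> carrier_mat p p" and dXc: "dX \<in> carrier_mat p p"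
    using X X0 skew_diff[OF X X0] unfolding skew_def dX_def by auto
  have Cc: "C \<in> carrier_mat p p" and C0c: "C0 \<in> carrier_mat p p"
    unfolding C_def C0_def using skew_minv[OF X] skew_minv[OF X0] by auto
  have d: "dim_row C = p" "dim_col C = p" "dim_row C0 = p" "dim_col C0 = p" "dim_row dX = p" "dim_col dX = p"
    "dim_row E = p" "dim_col E = r" using Cc C0c dXc E by auto
  have "U - U0 = ((1\<^sub>m p + X) * C - (1\<^sub>m p + X0) * C0) * E"
    unfolding U_def U0_def by (rule minus_mult_distrib_dims[symmetric]) (use Xc X0c Cc C0c E in auto)
  also have "\<dots> = 2 \<cdot>\<^sub>m (C * dX * C0) * E" unfolding C_def C0_def dX_def skew_cayley_diff[OF X X0] ..
  also have "\<dots> = 2 \<cdot>\<^sub>m (C * dX * C0 * E)" by (rule smult_mult_dims) (use d in simp)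
  finally show G: "U - U0 = 2 \<cdot>\<^sub>m (C * dX * C0 * E)" .
  have "U - U0 - 2 \<cdot>\<^sub>m (C0 * dX * (C0 * E)) = 2 \<cdot>\<^sub>m ((C - C0) * (dX * (C0 * E)))"
    unfolding G
    apply (simp add: mat_normalize_rules d)
    apply (rule eq_matI)
    apply (simp_all only: index_mat_rules d right_diff_distrib)
    done
  also have "C - C0 = C * dX * C0"
    unfolding C_def C0_def dX_def using skew_minv[OF X] skew_minv[OF X0]
    by (intro resolvent_identity) (use Xc X0c in auto)
  finally show "U - U0 - 2 \<cdot>\<^sub>m (C0 * dX * (C0 * E)) = 2 \<cdot>\<^sub>m ((C * dX * C0) * (dX * (C0 * E)))" .
qed

lemma cayley_factor_bounds:
  fixes X X0 E :: "real mat"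
  assumes X: "skew p X" and X0: "skew p X0" and E: "E \<in> carrier_mat p r" and oE: "op_bounded E 1"
  defines "C0 \<equiv> minv (1\<^sub>m p - X0)" and "dX \<equiv> X - X0"
  defines "U \<equiv> (1\<^sub>m p + X) * minv (1\<^sub>m p - X) * E" and "U0 \<equiv> (1\<^sub>m p + X0) * C0 * E"
  shows "fnorm (U - U0) \<le> 2 * fnorm dX"
    and "fnorm (U - U0 - 2 \<cdot>\<^sub>m (C0 * dX * (C0 * E))) \<le> 2 * (fnorm dX)\<^sup>2"
proof -
  define C where "C = minv (1\<^sub>m p - X)"
  note expansion = cayley_factor_expansion[OF X X0 E, folded C_def C0_def dX_def, folded U_def[folded C_def] U0_def]
  have dXc: "dX \<in> carrier_mat p p" using skew_diff[OF X X0] unfolding skew_def dX_def by auto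
  have Cc: "C \<in> carrier_mat p p" and C0c: "C0 \<in> carrier_mat p p"
    unfolding C_def C0_def using skew_minv[OF X] skew_minv[OF X0] by auto
  have oC: "op_bounded C 1" and oC0: "op_bounded C0 1"
    unfolding C_def C0_def using skew_resolvent_contraction[OF X] skew_resolvent_contraction[OF X0] .
  have oCdXC0: "op_bounded (C * dX * C0) (1 * fnorm dX * 1)"
    by (rule op_bounded_mult[OF _ C0c op_bounded_mult[OF Cc dXc oC op_bounded_fnorm[OF dXc]] oC0])
      (use Cc dXc in auto)
  have "fnorm (C * dX * C0 * E) \<le> fnorm (C * dX * C0) * 1"
    by (rule fnorm_mult_right[OF _ E oE]) (use Cc dXc C0c in auto)
  moreover have "fnorm (C * dX * C0) \<le> 1 * fnorm dX * 1"
    by (rule fnorm_mult_mult_le_mid[OF Cc dXc C0c oC oC0]) auto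
  ultimately show "fnorm (U - U0) \<le> 2 * fnorm dX" unfolding expansion(1) fnorm_smult by simp
  have oC0E: "op_bounded (C0 * E) 1" using op_bounded_mult[OF C0c E oC0 oE] by simp
  have "fnorm ((C * dX * C0) * (dX * (C0 * E))) \<le> (1 * fnorm dX * 1) * fnorm (dX * (C0 * E))"
    by (rule fnorm_mult_left[OF _ _ oCdXC0]) (use Cc dXc C0c E in auto)
  also have "\<dots> \<le> fnorm dX * (fnorm dX * 1)"
    using mult_left_mono[OF fnorm_mult_right[OF dXc mult_carrier_mat[OF C0c E] oC0E] fnorm_nonneg[of dX]] by simp
  finally show "fnorm (U - U0 - 2 \<cdot>\<^sub>m (C0 * dX * (C0 * E))) \<le> 2 * (fnorm dX)\<^sup>2"
    unfolding expansion(2) fnorm_smult by (simp add: power2_eq_square)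
qed

section \<open>Vectorisation and Kronecker products\<close>

lemma index_pair_bound: "a < m \<Longrightarrow> b < n \<Longrightarrow> a + m * b < m * (n::nat)"
proof -
  assume a: "a < m" and b: "b < n"
  have "a + m * b < m + m * b" using a by simp
  also have "\<dots> = m * (b + 1)" by (simp add: algebra_simps)
  also have "\<dots> \<le> m * n" using b by (intro mult_le_mono2) simp
  finally show ?thesis .
qed

lemma sum_mult_index:
  fixes f :: "nat \<Rightarrow> 'a::comm_monoid_add"
  shows "(\<Sum>l<m*n. f l) = (\<Sum>b<n. \<Sum>a<m. f (a + m*b))"
proof -
  have "(\<Sum>l<m*n. f l) = (\<Sum>(a,b)\<in>{..<m} \<times> {..<n}. f (a + m*b))"
    apply (rule sum.reindex_bij_witness[of _ "\<lambda>(a,b). a + m*b" "\<lambda>l. (l mod m, l div m)"])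
    subgoal by simp
    subgoal for l by (cases m) (auto simp: less_mult_imp_div_less mult.commute)
    subgoal for ab by (cases ab) auto
    subgoal for ab by (cases ab) (auto simp: index_pair_bound)
    subgoal by simp
    done
  also have "\<dots> = (\<Sum>a<m. \<Sum>b<n. f (a + m*b))" by (rule sum.cartesian_product[symmetric])
  also have "\<dots> = (\<Sum>b<n. \<Sum>a<m. f (a + m*b))" by (rule sum.swap)
  finally show ?thesis .
qed

lemma sum_split_add:
  fixes g :: "nat \<Rightarrow> 'a::comm_monoid_add"
  shows "(\<Sum>j<m1+m2. g j) = (\<Sum>j<m1. g j) + (\<Sum>j<m2. g (m1+j))"
  by (induction m2) (simp_all add: add.assoc)

lemma vecm_carrier[simp]: "M \<in> carrier_mat n m \<Longrightarrow> vecm M \<in> carrier_vec (n*m)"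
  unfolding vecm_def by simp

lemma dim_vecm[simp]: "dim_vec (vecm M) = dim_row M * dim_col M"
  unfolding vecm_def by simp

lemma vecm_index: "M \<in> carrier_mat n m \<Longrightarrow> a < n \<Longrightarrow> b < m \<Longrightarrow> vecm M $ (a + n*b) = M $$ (a,b)"
  using index_pair_bound[of a n b m] unfolding vecm_def by simp

lemma kron_vecm:
  assumes P: "P \<in> carrier_mat pr pc" and Q: "Q \<in> carrier_mat qr qc" and X: "X \<in> carrier_mat qc pc"
  shows "kron P Q *\<^sub>v vecm X = vecm (Q * X * transpose_mat P)"
proof (rule eq_vecI)
  show "dim_vec (kron P Q *\<^sub>v vecm X) = dim_vec (vecm (Q * X * transpose_mat P))"
    using P Q X by (simp add: kron_def)
  fix k assume "k < dim_vec (vecm (Q * X * transpose_mat P))"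
  hence k: "k < qr * pr" using P Q X by simp
  have qr: "0 < qr" using k by (cases qr) auto
  have kd: "k div qr < pr" using k by (simp add: less_mult_imp_div_less mult.commute)
  have km: "k mod qr < qr" using qr by simp
  have "(kron P Q *\<^sub>v vecm X) $ k = (\<Sum>l<qc*pc. P $$ (k div qr, l div qc) * Q $$ (k mod qr, l mod qc) * vecm X $ l)"
    using P Q X k by (simp add: kron_def scalar_prod_def atLeast0LessThan mult.commute[of pr qr] mult.commute[of pc qc])
  also have "\<dots> = (\<Sum>b<pc. \<Sum>a<qc. P $$ (k div qr, b) * Q $$ (k mod qr, a) * X $$ (a, b))"
    unfolding sum_mult_index
    by (intro sum.cong refl) (use X in \<open>auto simp: vecm_index\<close>)
  also have "\<dots> = (Q * X * transpose_mat P) $$ (k mod qr, k div qr)"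
    using P Q X kd km apply (simp add: scalar_prod_def atLeast0LessThan sum_distrib_left sum_distrib_right ac_simps)
    by (rule sum.swap)
  also have "\<dots> = vecm (Q * X * transpose_mat P) $ k"
    using P Q X k by (simp add: vecm_def)
  finally show "(kron P Q *\<^sub>v vecm X) $ k = vecm (Q * X * transpose_mat P) $ k" .
qed

lemma commut_vecm:
  assumes M: "M \<in> carrier_mat p q"
  shows "commut p q *\<^sub>v vecm M = vecm (transpose_mat M)"
proof (rule eq_vecI)
  show "dim_vec (commut p q *\<^sub>v vecm M) = dim_vec (vecm (transpose_mat M))"
    using M by (simp add: commut_def)
  fix i assume "i < dim_vec (vecm (transpose_mat M))"
  hence i: "i < p * q" using M by (simp add: mult.commute)
  have q: "0 < q" using i by (cases q) auto
  have id: "i div q < p" using i by (simp add: less_mult_imp_div_less mult.commute)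
  have im: "i mod q < q" using q by simp
  have "(commut p q *\<^sub>v vecm M) $ i = (\<Sum>j<p*q. (if i = j div p + q * (j mod p) then 1 else 0) * vecm M $ j)"
    using M i by (simp add: commut_def scalar_prod_def atLeast0LessThan)
  also have "\<dots> = (\<Sum>b<q. \<Sum>a<p. (if i = b + q * a then M $$ (a,b) else 0))"
    unfolding sum_mult_index
    by (intro sum.cong refl) (use M in \<open>auto simp: vecm_index\<close>)
  also have "\<dots> = (\<Sum>b<q. if b = i mod q then M $$ (i div q, b) else 0)"
  proof (rule sum.cong[OF refl])
    fix b assume b: "b \<in> {..<q}"
    have eq: "(i = b + q * a) \<longleftrightarrow> (b = i mod q \<and> a = i div q)" for a
    proof
      assume "i = b + q * a" thus "b = i mod q \<and> a = i div q" using b by auto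
    next
      assume "b = i mod q \<and> a = i div q" thus "i = b + q * a" by simp
    qed
    show "(\<Sum>a<p. if i = b + q * a then M $$ (a, b) else 0) = (if b = i mod q then M $$ (i div q, b) else 0)"
      unfolding eq using id by (auto simp: sum.delta')
  qed
  also have "\<dots> = M $$ (i div q, i mod q)" using im by (simp add: sum.delta')
  also have "\<dots> = vecm (transpose_mat M) $ i" using M i id im by (simp add: vecm_def mult.commute[of q p])
  finally show "(commut p q *\<^sub>v vecm M) $ i = vecm (transpose_mat M) $ i" .
qed

lemma hcat_mult:
  assumes A: "A \<in> carrier_mat n m1" and B: "B \<in> carrier_mat n m2"
    and x: "x \<in> carrier_vec m1" and y: "y \<in> carrier_vec m2"
  shows "hcat A B *\<^sub>v (x @\<^sub>v y) = A *\<^sub>v x + B *\<^sub>v y"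
proof (rule eq_vecI)
  show "dim_vec (hcat A B *\<^sub>v (x @\<^sub>v y)) = dim_vec (A *\<^sub>v x + B *\<^sub>v y)"
    using A B by (simp add: hcat_def)
  fix i assume "i < dim_vec (A *\<^sub>v x + B *\<^sub>v y)"
  hence i: "i < n" using B by simp
  have "(hcat A B *\<^sub>v (x @\<^sub>v y)) $ i = (\<Sum>j<m1+m2. (if j < m1 then A $$ (i,j) else B $$ (i, j - m1)) * (x @\<^sub>v y) $ j)"
  proof -
    have d: "dim_col A = m1" "dim_vec x = m1" "dim_col B = m2" "dim_vec y = m2" "dim_row A = n" using A B x y by auto
    show ?thesis using i by (simp add: d hcat_def scalar_prod_def atLeast0LessThan cong: if_cong)
  qed
  also have "\<dots> = (\<Sum>j<m1. A $$ (i,j) * x $ j) + (\<Sum>j<m2. B $$ (i,j) * y $ j)"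
    unfolding sum_split_add using x y by (simp cong: if_cong)
  also have "\<dots> = (A *\<^sub>v x + B *\<^sub>v y) $ i"
    using A B x y i by (simp add: scalar_prod_def atLeast0LessThan)
  finally show "(hcat A B *\<^sub>v (x @\<^sub>v y)) $ i = (A *\<^sub>v x + B *\<^sub>v y) $ i" .
qed

lemma divmod_bound: "i < n * (m::nat) \<Longrightarrow> i mod n < n \<and> i div n < m"
  by (cases n) (auto simp: less_mult_imp_div_less mult.commute)

lemma vecm_add: assumes "A \<in> carrier_mat n m" "B \<in> carrier_mat n m" shows "vecm (A + B) = vecm A + vecm B"
proof (rule eq_vecI)
  fix i assume "i < dim_vec (vecm A + vecm B)"
  hence "i < n * m" using assms by simp
  from divmod_bound[OF this] show "vecm (A + B) $ i = (vecm A + vecm B) $ i"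
    using assms \<open>i < n * m\<close> by (simp add: vecm_def)
qed (use assms in simp)

lemma vecm_minus: assumes "A \<in> carrier_mat n m" "B \<in> carrier_mat n m" shows "vecm (A - B) = vecm A - vecm B"
proof (rule eq_vecI)
  fix i assume "i < dim_vec (vecm A - vecm B)"
  hence "i < n * m" using assms by simp
  from divmod_bound[OF this] show "vecm (A - B) $ i = (vecm A - vecm B) $ i"
    using assms \<open>i < n * m\<close> by (simp add: vecm_def)
qed (use assms in simp)

lemma vecm_smult: "vecm (c \<cdot>\<^sub>m A) = c \<cdot>\<^sub>v vecm A"
proof (rule eq_vecI)
  fix i assume "i < dim_vec (c \<cdot>\<^sub>v vecm A)"
  hence "i < dim_row A * dim_col A" by simp
  from divmod_bound[OF this] show "vecm (c \<cdot>\<^sub>m A) $ i = (c \<cdot>\<^sub>v vecm A) $ i"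
    using \<open>i < dim_row A * dim_col A\<close> by (simp add: vecm_def)
qed simp

lemma smult_mat_mult_vec: "A \<in> carrier_mat n m \<Longrightarrow> v \<in> carrier_vec m \<Longrightarrow> (c \<cdot>\<^sub>m A) *\<^sub>v v = c \<cdot>\<^sub>v (A *\<^sub>v (v::real vec))"
  by (rule eq_vecI) (auto simp: scalar_prod_def sum_distrib_left ac_simps)

lemma fnorm_vecm: "fnorm M = vnorm (vecm M)"
proof -
  have M: "M \<in> carrier_mat (dim_row M) (dim_col M)" unfolding carrier_mat_def by blast
  have "(vnorm (vecm M))^2 = (\<Sum>l<dim_row M * dim_col M. (vecm M $ l)^2)" by (simp add: vnorm_sq')
  also have "\<dots> = (\<Sum>b<dim_col M. \<Sum>a<dim_row M. (vecm M $ (a + dim_row M * b))^2)"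
    by (rule sum_mult_index[of "\<lambda>l. (vecm M $ l)^2"])
  also have "\<dots> = (\<Sum>b<dim_col M. \<Sum>a<dim_row M. (M $$ (a,b))^2)"
    by (intro sum.cong refl) (simp add: vecm_index[OF M])
  also have "\<dots> = (\<Sum>a<dim_row M. \<Sum>b<dim_col M. (M $$ (a,b))^2)" by (rule sum.swap)
  also have "\<dots> = (fnorm M)^2" unfolding fnorm_def by (simp add: sum_nonneg)
  finally have "(vnorm (vecm M))^2 = (fnorm M)^2" .
  thus ?thesis using fnorm_nonneg vnorm_nonneg power2_eq_iff_nonneg by metis
qed

lemma vnorm_append_sq: "(vnorm (x @\<^sub>v y))^2 = (vnorm x)^2 + (vnorm y)^2"
  unfolding vnorm_sq' by (simp add: sum_split_add cong: if_cong)

lemma theta_minus: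
  assumes "A \<in> carrier_mat n m" "A0 \<in> carrier_mat n m" "\<mu> \<in> carrier_vec k" "\<mu>0 \<in> carrier_vec k"
  shows "theta A \<mu> - theta A0 \<mu>0 = (vecm A - vecm A0) @\<^sub>v (\<mu> - \<mu>0)"
  using assms unfolding theta_def by (intro eq_vecI) auto

section \<open>Half-vectorisation and the duplication matrix\<close>

definition vech_indices :: "nat \<Rightarrow> (nat \<times> nat) list" where
  "vech_indices n = concat (map (\<lambda>j. map (\<lambda>i. (i,j)) [j..<n]) [0..<n])"

lemma vech_via_indices: "vech M = vec_of_list (map (\<lambda>(i,j). M $$ (i,j)) (vech_indices (dim_row M)))"
  unfolding vech_def vech_indices_def by (simp add: map_concat comp_def)

lemma distinct_vech_indices: "distinct (vech_indices n)"
  unfolding vech_indices_def by (rule distinct_concat) (auto simp: distinct_map inj_on_def upt_conv_Cons)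

lemma set_vech_indices: "set (vech_indices n) = {(i,j). j \<le> i \<and> i < n}"
  unfolding vech_indices_def by (auto simp: image_iff)

lemma length_vech_indices_sum: "length (vech_indices n) = (\<Sum>j<n. n - j)"
  unfolding vech_indices_def by (simp add: length_concat comp_def sum_list_sum_nth atLeast0LessThan)

lemma triangular_sum: "2 * (\<Sum>j<n. n - j) = n * (n + 1::nat)"
proof (induction n)
  case (Suc n)
  have "(\<Sum>j<Suc n. Suc n - j) = (\<Sum>j<n. Suc n - j) + 1" by simp
  also have "(\<Sum>j<n. Suc n - j) = (\<Sum>j<n. (n - j) + 1)" by (rule sum.cong) auto
  also have "\<dots> = (\<Sum>j<n. n - j) + n" unfolding sum.distrib by simp
  finally show ?case using Suc by simp
qed simp

lemma length_vech_indices: "length (vech_indices n) = n * (n + 1) div 2"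
  using triangular_sum[of n] unfolding length_vech_indices_sum by simp

definition list_pos :: "'a list \<Rightarrow> 'a \<Rightarrow> nat" where
  "list_pos L x = (THE k. k < length L \<and> L ! k = x)"

lemma list_pos_nth: "distinct L \<Longrightarrow> k < length L \<Longrightarrow> list_pos L (L ! k) = k"
  unfolding list_pos_def by (rule the_equality) (auto simp: nth_eq_iff_index_eq)

lemma nth_list_pos: assumes "distinct L" "x \<in> set L" shows "list_pos L x < length L \<and> L ! list_pos L x = x"
proof -
  obtain k where "k < length L" "L ! k = x" using assms(2) by (auto simp: in_set_conv_nth)
  thus ?thesis using list_pos_nth[OF assms(1)] by auto
qed

lemma vech_indices_nth: "k < length (vech_indices n) \<Longrightarrow> snd (vech_indices n ! k) \<le> fst (vech_indices n ! k) \<and> fst (vech_indices n ! k) < n"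
  using nth_mem[of k "vech_indices n"] unfolding set_vech_indices by auto

definition unvech :: "nat \<Rightarrow> real vec \<Rightarrow> real mat" where
  "unvech n \<mu> = mat n n (\<lambda>(i,j). \<mu> $ list_pos (vech_indices n) (max i j, min i j))"

lemma symm_unvech: "symm n (unvech n \<mu>)"
  unfolding symm_def unvech_def by (auto intro!: eq_matI simp: max.commute min.commute)

lemma vech_unvech: assumes "\<mu> \<in> carrier_vec (n * (n + 1) div 2)"
  shows "vech (unvech n \<mu>) = \<mu>"
proof (rule eq_vecI)
  show "dim_vec (vech (unvech n \<mu>)) = dim_vec \<mu>" using assms
    by (simp add: vech_via_indices unvech_def length_vech_indices)
  fix k assume "k < dim_vec \<mu>"
  hence k: "k < length (vech_indices n)" using assms by (simp add: length_vech_indices)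
  obtain i j where ij: "vech_indices n ! k = (i,j)" by fastforce
  with vech_indices_nth[OF k] have "j \<le> i" "i < n" by auto
  hence "vech (unvech n \<mu>) $ k = \<mu> $ list_pos (vech_indices n) (i,j)"
    using k ij by (simp add: vech_via_indices unvech_def index_vec_of_list max_def min_def)
  also have "\<dots> = \<mu> $ k" using list_pos_nth[OF distinct_vech_indices k] ij by simp
  finally show "vech (unvech n \<mu>) $ k = \<mu> $ k" .
qed

lemma symm_entry: assumes "symm n M" "i < n" "j < n" shows "M $$ (i,j) = M $$ (j,i)"
proof -
  have M: "M \<in> carrier_mat n n" "transpose_mat M = M" using assms unfolding symm_def by auto
  have "M $$ (i,j) = transpose_mat M $$ (i,j)" by (simp only: M(2))
  also have "\<dots> = M $$ (j,i)" using M(1) assms by simp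
  finally show ?thesis .
qed

lemma vech_inj:
  assumes "symm n M" "symm n M'" "vech M = vech M'"
  shows "M = M'"
proof -
  have M: "M \<in> carrier_mat n n" "transpose_mat M = M" and M': "M' \<in> carrier_mat n n" "transpose_mat M' = M'"
    using assms unfolding symm_def by auto
  have low: "M $$ (i,j) = M' $$ (i,j)" if "j \<le> i" "i < n" for i j
  proof -
    have "(i,j) \<in> set (vech_indices n)" using that by (simp add: set_vech_indices)
    from nth_list_pos[OF distinct_vech_indices this] obtain k where k: "k < length (vech_indices n)" "vech_indices n ! k = (i,j)" by blast
    have "vech M $ k = M $$ (i,j)" using k M by (simp add: vech_via_indices index_vec_of_list)
    moreover have "vech M' $ k = M' $$ (i,j)" using k M' by (simp add: vech_via_indices index_vec_of_list)
    ultimately show ?thesis using assms(3) by simp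
  qed
  show ?thesis
  proof (rule eq_matI)
    fix i j assume ij: "i < dim_row M'" "j < dim_col M'"
    show "M $$ (i,j) = M' $$ (i,j)"
    proof (cases "j \<le> i")
      case True thus ?thesis using low ij M' by auto
    next
      case False
      hence "M $$ (j,i) = M' $$ (j,i)" using low ij M' by auto
      moreover have "M $$ (i,j) = M $$ (j,i)"
        using symm_entry[OF assms(1)] ij M' by auto
      moreover have "M' $$ (i,j) = M' $$ (j,i)"
        using symm_entry[OF assms(2)] ij M' by auto
      ultimately show ?thesis by simp
    qed
  qed (use M M' in auto)
qed

lemma Mmu_eq_unvech: assumes "\<mu> \<in> carrier_vec (n * (n + 1) div 2)"
  shows "Mmu n \<mu> = unvech n \<mu>"
  unfolding Mmu_def
  by (rule the_equality) (use symm_unvech vech_unvech[OF assms] vech_inj in auto)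

lemma symm_Mmu: "\<mu> \<in> carrier_vec (n * (n + 1) div 2) \<Longrightarrow> symm n (Mmu n \<mu>)"
  using Mmu_eq_unvech symm_unvech by simp

lemma unvech_diff: assumes "\<mu> \<in> carrier_vec (n * (n + 1) div 2)" "\<nu> \<in> carrier_vec (n * (n + 1) div 2)"
  shows "unvech n \<mu> - unvech n \<nu> = unvech n (\<mu> - \<nu>)"
proof (rule eq_matI)
  fix i j assume ij: "i < dim_row (unvech n (\<mu> - \<nu>))" "j < dim_col (unvech n (\<mu> - \<nu>))"
  hence "(max i j, min i j) \<in> set (vech_indices n)" by (auto simp: unvech_def set_vech_indices)
  from nth_list_pos[OF distinct_vech_indices this] have "list_pos (vech_indices n) (max i j, min i j) < n * (n + 1) div 2"
    by (simp add: length_vech_indices)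
  thus "(unvech n \<mu> - unvech n \<nu>) $$ (i,j) = unvech n (\<mu> - \<nu>) $$ (i,j)"
    using ij assms by (simp add: unvech_def)
qed (auto simp: unvech_def)

lemma sum_symmetric_le_twice_lower:
  fixes f :: "nat \<Rightarrow> nat \<Rightarrow> real"
  assumes nn: "\<And>i j. 0 \<le> f i j"
  shows "(\<Sum>i<n. \<Sum>j<n. f (max i j) (min i j)) \<le> 2 * (\<Sum>(i,j)\<in>{(i,j). j \<le> i \<and> i < n}. f i j)"
proof -
  let ?S = "{(i,j). j \<le> i \<and> i < n}" and ?T = "{(i,j). i < j \<and> j < n}"
  have fin: "finite ?S" "finite ?T"
    by (rule finite_subset[of _ "{..<n} \<times> {..<n}"], auto)+
  have "(\<Sum>i<n. \<Sum>j<n. f (max i j) (min i j)) = (\<Sum>(i,j)\<in>{..<n} \<times> {..<n}. f (max i j) (min i j))"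
    by (simp add: sum.cartesian_product)
  also have "{..<n} \<times> {..<n} = ?S \<union> ?T" by auto
  also have "(\<Sum>(i,j)\<in>?S \<union> ?T. f (max i j) (min i j)) =
     (\<Sum>(i,j)\<in>?S. f (max i j) (min i j)) + (\<Sum>(i,j)\<in>?T. f (max i j) (min i j))"
    by (rule sum.union_disjoint) (use fin in auto)
  also have "(\<Sum>(i,j)\<in>?S. f (max i j) (min i j)) = (\<Sum>(i,j)\<in>?S. f i j)"
    by (rule sum.cong) (auto simp: max_def min_def)
  also have "(\<Sum>(i,j)\<in>?T. f (max i j) (min i j)) = (\<Sum>(i,j)\<in>?T. f j i)"
    by (rule sum.cong) (auto simp: max_def min_def)
  also have "\<dots> = (\<Sum>(i,j)\<in>{(i,j). j < i \<and> i < n}. f i j)"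
    by (rule sum.reindex_bij_witness[of _ "\<lambda>(a,b). (b,a)" "\<lambda>(a,b). (b,a)"]) auto
  also have "\<dots> \<le> (\<Sum>(i,j)\<in>?S. f i j)"
    by (rule sum_mono2) (use fin nn in \<open>auto simp: case_prod_beta\<close>)
  finally show ?thesis by simp
qed

lemma fnorm_unvech_sq_le:
  assumes d: "d \<in> carrier_vec (n * (n + 1) div 2)"
  shows "(fnorm (unvech n d))^2 \<le> 2 * (vnorm d)^2"
proof -
  let ?f = "\<lambda>i j. (d $ list_pos (vech_indices n) (i,j))^2"
  have "(fnorm (unvech n d))^2 = (\<Sum>i<n. \<Sum>j<n. ?f (max i j) (min i j))"
    unfolding fnorm_def by (simp add: sum_nonneg unvech_def)
  also have "\<dots> \<le> 2 * (\<Sum>(i,j)\<in>{(i,j). j \<le> i \<and> i < n}. ?f i j)"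
    by (rule sum_symmetric_le_twice_lower) simp
  also have "(\<Sum>(i,j)\<in>{(i,j). j \<le> i \<and> i < n}. ?f i j) = (\<Sum>(i,j)\<in>set (vech_indices n). ?f i j)"
    by (simp add: set_vech_indices)
  also have "\<dots> = sum_list (map (\<lambda>(i,j). ?f i j) (vech_indices n))"
    by (rule sum_list_distinct_conv_sum_set[symmetric, OF distinct_vech_indices])
  also have "\<dots> = (\<Sum>k<length (vech_indices n). (\<lambda>(i,j). ?f i j) (vech_indices n ! k))"
    by (simp add: sum_list_sum_nth atLeast0LessThan)
  also have "\<dots> = (\<Sum>k<length (vech_indices n). (d $ k)^2)"
    by (rule sum.cong) (auto simp: case_prod_beta list_pos_nth[OF distinct_vech_indices])
  also have "\<dots> = (vnorm d)^2" using d by (simp add: vnorm_sq' length_vech_indices)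
  finally show ?thesis by simp
qed

lemma mult_unit_vec_index: "(D :: real mat) \<in> carrier_mat r c \<Longrightarrow> a < r \<Longrightarrow> k < c \<Longrightarrow>
  (D *\<^sub>v unit_vec c k) $ a = D $$ (a,k)"
proof -
  assume D: "D \<in> carrier_mat r c" and a: "a < r" and k: "k < c"
  have "(D *\<^sub>v unit_vec c k) $ a = row D a \<bullet> unit_vec c k"
    by (rule index_mult_mat_vec) (use D a in auto)
  also have "\<dots> = row D a $ k" by (rule scalar_prod_right_unit[OF k])
  also have "\<dots> = D $$ (a,k)" by (rule index_row) (use D a k in auto)
  finally show ?thesis .
qed

definition dupl_mat :: "nat \<Rightarrow> real mat" where
  "dupl_mat n = mat (n*n) (n * (n + 1) div 2) (\<lambda>(a,k).
     if vech_indices n ! k = (max (a mod n) (a div n), min (a mod n) (a div n)) then 1 else 0)"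

lemma vecm_dupl_mat:
  assumes "symm n M"
  shows "vecm M = dupl_mat n *\<^sub>v vech M"
proof (rule eq_vecI)
  have M: "M \<in> carrier_mat n n" "transpose_mat M = M" using assms unfolding symm_def by auto
  show "dim_vec (vecm M) = dim_vec (dupl_mat n *\<^sub>v vech M)" using M by (simp add: vecm_def dupl_mat_def)
  fix a assume "a < dim_vec (dupl_mat n *\<^sub>v vech M)"
  hence a: "a < n * n" by (simp add: dupl_mat_def)
  have n: "0 < n" using a by (cases n) auto
  let ?t = "(max (a mod n) (a div n), min (a mod n) (a div n))"
  have adiv: "a div n < n" using a by (simp add: less_mult_imp_div_less)
  have amod: "a mod n < n" using n by simp
  have t: "?t \<in> set (vech_indices n)" using adiv amod by (auto simp: set_vech_indices)
  from nth_list_pos[OF distinct_vech_indices t] have pt: "list_pos (vech_indices n) ?t < length (vech_indices n)" "vech_indices n ! list_pos (vech_indices n) ?t = ?t" by auto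
  have "(dupl_mat n *\<^sub>v vech M) $ a = (\<Sum>k<length (vech_indices n). (if vech_indices n ! k = ?t then 1 else 0) * vech M $ k)"
    using a M by (simp add: dupl_mat_def scalar_prod_def vech_via_indices length_vech_indices atLeast0LessThan)
  also have "\<dots> = (\<Sum>k<length (vech_indices n). (if k = list_pos (vech_indices n) ?t then vech M $ k else 0))"
    apply (rule sum.cong, simp)
    subgoal for k using list_pos_nth[OF distinct_vech_indices[of n], of k] pt by auto
    done
  also have "\<dots> = vech M $ list_pos (vech_indices n) ?t" using pt by simp
  also have "\<dots> = M $$ ?t" using pt M by (simp add: vech_via_indices index_vec_of_list)
  also have "\<dots> = M $$ (a mod n, a div n)"
    using symm_entry[OF assms, of "a mod n" "a div n"] adiv amod
    by (cases "a div n \<le> a mod n") (auto simp: max_def min_def)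
  finally show "vecm M $ a = (dupl_mat n *\<^sub>v vech M) $ a" using M a by (simp add: vecm_def)
qed

lemma dupl_eq_dupl_mat: "dupl n = dupl_mat n"
  unfolding dupl_def
proof (rule the_equality)
  show "dupl_mat n \<in> carrier_mat (n * n) (n * (n + 1) div 2) \<and> (\<forall>M. symm n M \<longrightarrow> vecm M = dupl_mat n *\<^sub>v vech M)"
    using vecm_dupl_mat by (auto simp: dupl_mat_def)
  fix D assume D: "D \<in> carrier_mat (n * n) (n * (n + 1) div 2) \<and> (\<forall>M. symm n M \<longrightarrow> vecm M = D *\<^sub>v vech M)"
  show "D = dupl_mat n"
  proof (rule eq_matI)
    fix a k assume ak: "a < dim_row (dupl_mat n)" "k < dim_col (dupl_mat n)"
    let ?e = "unit_vec (n * (n + 1) div 2) k"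
    have e: "?e \<in> carrier_vec (n * (n + 1) div 2)" by simp
    have "D *\<^sub>v vech (unvech n ?e) = dupl_mat n *\<^sub>v vech (unvech n ?e)"
      using D vecm_dupl_mat[OF symm_unvech] symm_unvech by metis
    hence "D *\<^sub>v ?e = dupl_mat n *\<^sub>v ?e" unfolding vech_unvech[OF e] .
    hence h1: "(D *\<^sub>v ?e) $ a = (dupl_mat n *\<^sub>v ?e) $ a" by (rule arg_cong)
    have Dc: "D \<in> carrier_mat (n * n) (n * (n + 1) div 2)" using D by blast
    have Dmc: "dupl_mat n \<in> carrier_mat (n * n) (n * (n + 1) div 2)" by (simp add: dupl_mat_def)
    have ak': "a < n * n" "k < n * (n + 1) div 2" using ak by (auto simp: dupl_mat_def)
    have h2: "(D *\<^sub>v ?e) $ a = D $$ (a,k)" by (rule mult_unit_vec_index[OF Dc ak'])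
    have h3: "(dupl_mat n *\<^sub>v ?e) $ a = dupl_mat n $$ (a,k)" by (rule mult_unit_vec_index[OF Dmc ak'])
    show "D $$ (a,k) = dupl_mat n $$ (a,k)" using h1 h2 h3 by metis
  qed (use D in \<open>auto simp: dupl_mat_def\<close>)
qed

lemma dim_Xphi[simp]: "dim_row (Xphi p r A) = r + (p - r)" "dim_col (Xphi p r A) = r + (p - r)"
  unfolding Xphi_def by auto

lemma dim_Theta[simp]: "dim_row (Theta1 p r) = r" "dim_col (Theta1 p r) = p"
  "dim_row (Theta2 p r) = p - r" "dim_col (Theta2 p r) = p" "dim_row (Ipr p r) = p" "dim_col (Ipr p r) = r"
  unfolding Theta1_def Theta2_def Ipr_def by auto

lemma Theta1_carrier: "Theta1 p r \<in> carrier_mat r p" unfolding Theta1_def Ipr_def by auto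

lemma Theta2_carrier: "Theta2 p r \<in> carrier_mat (p - r) p" unfolding Theta2_def by auto

lemma Ipr_carrier: "Ipr p r \<in> carrier_mat p r" unfolding Ipr_def by auto

lemma Xphi_carrier: "A \<in> carrier_mat (p-r) r \<Longrightarrow> r \<le> p \<Longrightarrow> Xphi p r A \<in> carrier_mat p p"
  unfolding Xphi_def by (rule carrier_matI) auto

lemma Xphi_index:
  assumes "A \<in> carrier_mat (p-r) r" and "r \<le> p" and "i < p" "j < p"
  shows "Xphi p r A $$ (i,j) = (if i < r then (if j < r then 0 else - A $$ (j - r, i))
                                 else (if j < r then A $$ (i - r, j) else 0))"
  using assms unfolding Xphi_def by auto

lemma Xphi_skew: assumes "A \<in> carrier_mat (p-r) r" "r \<le> p" shows "skew p (Xphi p r A)"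
  unfolding skew_def
proof
  show "Xphi p r A \<in> carrier_mat p p" using Xphi_carrier[OF assms] .
  show "transpose_mat (Xphi p r A) = - Xphi p r A"
    by (rule eq_matI) (use assms in \<open>auto simp: Xphi_index\<close>)
qed

lemma Xphi_minus:
  assumes "A \<in> carrier_mat (p-r) r" "A0 \<in> carrier_mat (p-r) r" "r \<le> p"
  shows "Xphi p r A - Xphi p r A0 = Xphi p r (A - A0)"
  by (rule eq_matI) (use assms in \<open>auto simp: Xphi_index\<close>)

lemma fnorm_Xphi_sq:
  assumes A: "A \<in> carrier_mat (p-r) r" and rp: "r \<le> p"
  shows "(fnorm (Xphi p r A))^2 = 2 * (fnorm A)^2"
proof -
  let ?X = "Xphi p r A"
  have "(fnorm ?X)^2 = (\<Sum>i<r + (p - r). \<Sum>j<r + (p - r). (?X $$ (i,j))^2)"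
    unfolding fnorm_def dim_Xphi by (simp add: sum_nonneg)
  also have "\<dots> = (\<Sum>i<r. \<Sum>j<p - r. (A $$ (j,i))^2) + (\<Sum>i<p - r. \<Sum>j<r. (A $$ (i,j))^2)"
    unfolding sum_split_add using A rp by (simp add: Xphi_index)
  also have "(\<Sum>i<r. \<Sum>j<p - r. (A $$ (j,i))^2) = (\<Sum>i<p - r. \<Sum>j<r. (A $$ (i,j))^2)" by (rule sum.swap)
  also have "(\<Sum>i<p - r. \<Sum>j<r. (A $$ (i,j))^2) = (fnorm A)^2" unfolding fnorm_def using A by (simp add: sum_nonneg)
  finally show ?thesis by simp
qed

lemma Theta_Y_index:
  assumes A: "A \<in> carrier_mat (p-r) r" and rp: "r \<le> p" and ij: "i < p" "j < p"
  shows "(transpose_mat (Theta2 p r) * A * Theta1 p r) $$ (i,j) = (if r \<le> i \<and> j < r then A $$ (i - r, j) else 0)"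
proof -
  have T2: "transpose_mat (Theta2 p r) * A \<in> carrier_mat p r"
    using mult_carrier_mat[OF transpose_carrier_mat[THEN iffD2, OF Theta2_carrier] A] .
  have e1: "(transpose_mat (Theta2 p r) * A) $$ (i,b) = (if r \<le> i then A $$ (i - r, b) else 0)" if b: "b < r" for b
  proof -
    have "(transpose_mat (Theta2 p r) * A) $$ (i,b) = (\<Sum>a<p-r. (if i = r + a then 1 else 0) * A $$ (a,b))"
      using A ij b by (simp add: Theta2_def scalar_prod_def atLeast0LessThan)
    also have "\<dots> = (\<Sum>a<p-r. (if a = i - r \<and> r \<le> i then A $$ (a,b) else 0))"
      by (rule sum.cong) auto
    also have "\<dots> = (if r \<le> i then A $$ (i - r, b) else 0)" using ij rp by (auto simp: sum.delta')
    finally show ?thesis .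
  qed
  have "(transpose_mat (Theta2 p r) * A * Theta1 p r) $$ (i,j) = (\<Sum>b<r. (transpose_mat (Theta2 p r) * A) $$ (i,b) * (if j = b then 1 else 0))"
  proof -
    have d: "dim_row (transpose_mat (Theta2 p r) * A) = p" "dim_col (transpose_mat (Theta2 p r) * A) = r" using T2 by auto
    show ?thesis using ij apply (simp add: d Theta1_def Ipr_def scalar_prod_def atLeast0LessThan)
      by (intro sum.cong refl) (use A in \<open>simp add: d\<close>)
  qed
  also have "\<dots> = (\<Sum>b<r. if b = j then (if r \<le> i then A $$ (i - r, b) else 0) else 0)"
    by (rule sum.cong) (auto simp: e1)
  also have "\<dots> = (if r \<le> i \<and> j < r then A $$ (i - r, j) else 0)" by (auto simp: sum.delta')
  finally show ?thesis .
qed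

lemma Gam_vecm:
  assumes A: "A \<in> carrier_mat (p-r) r" and rp: "r \<le> p"
  shows "Gam p r *\<^sub>v vecm A = vecm (Xphi p r A)"
proof -
  let ?Y = "transpose_mat (Theta2 p r) * A * Theta1 p r"
  have T1: "transpose_mat (Theta1 p r) \<in> carrier_mat p r" by (simp add: Theta1_def Ipr_def)
  have T2: "transpose_mat (Theta2 p r) \<in> carrier_mat p (p-r)" by (simp add: Theta2_def)
  have Y: "?Y \<in> carrier_mat p p"
    using mult_carrier_mat[OF mult_carrier_mat[OF transpose_carrier_mat[THEN iffD2, OF Theta2_carrier] A] Theta1_carrier] .
  have K: "commut p p \<in> carrier_mat (p*p) (p*p)" by (simp add: commut_def)
  have kr: "kron (transpose_mat (Theta1 p r)) (transpose_mat (Theta2 p r)) \<in> carrier_mat (p*p) (r*(p-r))"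
    by (simp add: kron_def Theta1_def Theta2_def Ipr_def)
  have v: "vecm A \<in> carrier_vec (r*(p-r))" using vecm_carrier[OF A] by (simp add: mult.commute)
  have "Gam p r *\<^sub>v vecm A = (1\<^sub>m (p*p) - commut p p) *\<^sub>v (kron (transpose_mat (Theta1 p r)) (transpose_mat (Theta2 p r)) *\<^sub>v vecm A)"
    unfolding Gam_def by (rule assoc_mult_mat_vec) (use K kr v in auto)
  also have "kron (transpose_mat (Theta1 p r)) (transpose_mat (Theta2 p r)) *\<^sub>v vecm A = vecm ?Y"
    using kron_vecm[OF T1 T2 A] by simp
  also have "(1\<^sub>m (p*p) - commut p p) *\<^sub>v vecm ?Y = vecm ?Y - commut p p *\<^sub>v vecm ?Y"
    using K Y by (simp add: minus_mult_distrib_mat_vec[of _ "p*p" "p*p"])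
  also have "\<dots> = vecm ?Y - vecm (transpose_mat ?Y)" using commut_vecm[OF Y] by simp
  also have "\<dots> = vecm (?Y - transpose_mat ?Y)" using Y by (simp add: vecm_minus[of _ p p])
  also have "?Y - transpose_mat ?Y = Xphi p r A"
  proof (rule eq_matI)
    fix i j assume ij: "i < dim_row (Xphi p r A)" "j < dim_col (Xphi p r A)"
    hence ij': "i < p" "j < p" using rp by auto
    have "(?Y - transpose_mat ?Y) $$ (i,j) = ?Y $$ (i,j) - ?Y $$ (j,i)" using ij' A by simp
    also have "\<dots> = Xphi p r A $$ (i,j)"
      unfolding Theta_Y_index[OF A rp ij'] Theta_Y_index[OF A rp ij'(2) ij'(1)]
      using ij' A rp by (simp add: Xphi_index)
    finally show "(?Y - transpose_mat ?Y) $$ (i,j) = Xphi p r A $$ (i,j)" .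
  qed (use rp A in auto)
  finally show ?thesis .
qed

section \<open>Linearization of Sigma\<close>

lemma congruence_remainder_expansion:
  fixes U0 G Z M0 DM :: "real mat"
  assumes U0: "U0 \<in> carrier_mat p r" and G: "G \<in> carrier_mat p r" and Z: "Z \<in> carrier_mat p r"
    and M0: "M0 \<in> carrier_mat r r" and DM: "DM \<in> carrier_mat r r" and sym: "transpose_mat M0 = M0"
  shows "(U0 + G) * (M0 + DM) * transpose_mat (U0 + G) - U0 * M0 * transpose_mat U0
     - ((G - Z) * transpose_mat (U0 * M0) + transpose_mat ((G - Z) * transpose_mat (U0 * M0)) + U0 * DM * transpose_mat U0)
   = Z * M0 * transpose_mat U0 + U0 * M0 * transpose_mat Z + G * M0 * transpose_mat G
     + G * DM * transpose_mat (U0 + G) + U0 * DM * transpose_mat G"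
proof -
  have d: "dim_row U0 = p" "dim_col U0 = r" "dim_row G = p" "dim_col G = r" "dim_row Z = p" "dim_col Z = r"
    "dim_row M0 = r" "dim_col M0 = r" "dim_row DM = r" "dim_col DM = r" using assms by auto
  show ?thesis
    apply (simp add: mat_normalize_rules d sym)
    apply (rule eq_matI)
    apply (simp_all only: index_mat_rules d)
    done
qed

lemma fnorm_congruence_expansion_le:
  fixes U U0 G Z M0 DM :: "real mat"
  assumes U: "U \<in> carrier_mat p r" and U0: "U0 \<in> carrier_mat p r"
    and Gc: "G \<in> carrier_mat p r" and Zc: "Z \<in> carrier_mat p r"
    and M0: "M0 \<in> carrier_mat r r" and DMc: "DM \<in> carrier_mat r r"
    and oU: "op_bounded U 1" and oU0: "op_bounded U0 1" and oM0: "op_bounded M0 m" and m: "0 \<le> m"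
  shows "fnorm (Z * M0 * transpose_mat U0 + U0 * M0 * transpose_mat Z + G * M0 * transpose_mat G
      + G * DM * transpose_mat U + U0 * DM * transpose_mat G)
    \<le> 2 * m * fnorm Z + m * fnorm G * fnorm G + 2 * fnorm G * fnorm DM"
proof -
  have oUT: "op_bounded (transpose_mat U) 1" and oU0T: "op_bounded (transpose_mat U0) 1"
    using op_bounded_transpose[OF U oU] op_bounded_transpose[OF U0 oU0] by auto
  have oGT: "op_bounded (transpose_mat G) (fnorm G)"
    by (rule op_bounded_transpose[OF Gc op_bounded_fnorm[OF Gc]]) simp
  have tZ: "fnorm (Z * M0 * transpose_mat U0) \<le> fnorm Z * m * 1"
    by (rule fnorm_mult_mult_le_left[OF Zc M0 _ oM0 oU0T m]) (use U0 in auto)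
  have tZ': "fnorm (U0 * M0 * transpose_mat Z) \<le> (1 * m) * fnorm (transpose_mat Z)"
    by (rule fnorm_mult_left[OF _ _ op_bounded_mult[OF U0 M0 oU0 oM0]]) (use U0 M0 Zc m in auto)
  have tG: "fnorm (G * M0 * transpose_mat G) \<le> fnorm G * m * fnorm G"
    by (rule fnorm_mult_mult_le_left[OF Gc M0 _ oM0 oGT m]) (use Gc in auto)
  have tGD: "fnorm (G * DM * transpose_mat U) \<le> fnorm G * fnorm DM * 1"
    by (rule fnorm_mult_mult_le_left[OF Gc DMc _ op_bounded_fnorm[OF DMc] oUT]) (use U in auto)
  have tDG: "fnorm (U0 * DM * transpose_mat G) \<le> 1 * fnorm DM * fnorm G"
    by (rule fnorm_mult_mult_le_mid[OF U0 DMc _ oU0 oGT]) (use Gc in auto)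
  let ?T1 = "Z * M0 * transpose_mat U0" and ?T2 = "U0 * M0 * transpose_mat Z"
    and ?T3 = "G * M0 * transpose_mat G" and ?T4 = "G * DM * transpose_mat U" and ?T5 = "U0 * DM * transpose_mat G"
  have c: "?T1 \<in> carrier_mat p p" "?T2 \<in> carrier_mat p p" "?T3 \<in> carrier_mat p p"
    "?T4 \<in> carrier_mat p p" "?T5 \<in> carrier_mat p p"
    using Zc Gc DMc U U0 M0 by auto
  have "fnorm (?T1 + ?T2 + ?T3 + ?T4 + ?T5) \<le> fnorm (?T1 + ?T2 + ?T3 + ?T4) + fnorm ?T5"
    and "fnorm (?T1 + ?T2 + ?T3 + ?T4) \<le> fnorm (?T1 + ?T2 + ?T3) + fnorm ?T4"
    and "fnorm (?T1 + ?T2 + ?T3) \<le> fnorm (?T1 + ?T2) + fnorm ?T3"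
    and "fnorm (?T1 + ?T2) \<le> fnorm ?T1 + fnorm ?T2"
    by (rule fnorm_add_le; use c in auto)+
  moreover have "fnorm ?T1 + fnorm ?T2 + fnorm ?T3 + fnorm ?T4 + fnorm ?T5
    \<le> 2 * m * fnorm Z + m * fnorm G * fnorm G + 2 * fnorm G * fnorm DM"
    using tZ tZ' tG tGD tDG by (simp add: fnorm_transpose algebra_simps)
  ultimately show ?thesis by linarith
qed

lemma congruence_remainder_bound:
  fixes U U0 V M M0 :: "real mat"
  assumes U: "U \<in> carrier_mat p r" and U0: "U0 \<in> carrier_mat p r" and V: "V \<in> carrier_mat p r"
    and M: "M \<in> carrier_mat r r" and M0: "M0 \<in> carrier_mat r r" and sym: "transpose_mat M0 = M0"
    and oU: "op_bounded U 1" and oU0: "op_bounded U0 1" and oM0: "op_bounded M0 m" and m: "0 \<le> m"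
    and fG: "fnorm (U - U0) \<le> 2 * d" and fZ: "fnorm (U - U0 - V) \<le> 2 * d\<^sup>2"
  shows "fnorm (U * M * transpose_mat U - U0 * M0 * transpose_mat U0
      - (V * transpose_mat (U0 * M0) + transpose_mat (V * transpose_mat (U0 * M0)) + U0 * (M - M0) * transpose_mat U0))
    \<le> 8 * m * d\<^sup>2 + 2 * d\<^sup>2 + 2 * (fnorm (M - M0))\<^sup>2"
proof -
  define G where "G = U - U0"
  define Z where "Z = G - V"
  define DM where "DM = M - M0"
  have Gc: "G \<in> carrier_mat p r" and Zc: "Z \<in> carrier_mat p r" and DMc: "DM \<in> carrier_mat r r"
    unfolding G_def Z_def DM_def using U U0 V M M0 by auto
  have "U0 + G = U" "M0 + DM = M" "G - Z = V"
    unfolding G_def Z_def DM_def by (rule eq_matI; use U U0 V M M0 in auto)+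
  note expansion = congruence_remainder_expansion[OF U0 Gc Zc M0 DMc sym, unfolded this]
  have "fnorm (Z * M0 * transpose_mat U0 + U0 * M0 * transpose_mat Z + G * M0 * transpose_mat G
      + G * DM * transpose_mat U + U0 * DM * transpose_mat G)
    \<le> 2 * m * fnorm Z + m * fnorm G * fnorm G + 2 * fnorm G * fnorm DM"
    by (rule fnorm_congruence_expansion_le[OF U U0 Gc Zc M0 DMc oU oU0 oM0 m])
  also have "\<dots> \<le> 8 * m * d\<^sup>2 + 2 * d\<^sup>2 + 2 * (fnorm DM)\<^sup>2"
  proof -
    have fG': "fnorm G \<le> 2 * d" using fG unfolding G_def .
    have d0: "0 \<le> d" using fG' fnorm_nonneg[of G] by linarith
    have "m * fnorm Z \<le> m * (2 * d\<^sup>2)" by (rule mult_left_mono[OF fZ[folded G_def Z_def] m])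
    moreover have "m * fnorm G * fnorm G \<le> m * (2 * d) * (2 * d)"
      using mult_left_mono[OF mult_mono[OF fG' fG'] m] d0 by (simp add: mult.assoc)
    moreover have "fnorm G * fnorm DM \<le> (2 * d) * fnorm DM"
      by (rule mult_right_mono[OF fG']) simp
    moreover have "4 * d * fnorm DM \<le> 2 * d\<^sup>2 + 2 * (fnorm DM)\<^sup>2"
      using zero_le_power2[of "d - fnorm DM"] by (simp add: power2_eq_square algebra_simps)
    ultimately show ?thesis by (simp add: power2_eq_square algebra_simps)
  qed
  finally show ?thesis unfolding DM_def[symmetric] expansion .
qed

lemma cayley_linear_term:
  fixes X0 dX E M0 :: "real mat"
  assumes X0: "skew p X0" and dX: "skew p dX" and E: "E \<in> carrier_mat p r"
    and M0: "M0 \<in> carrier_mat r r" and sym: "transpose_mat M0 = M0"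
  defines "C0 \<equiv> minv (1\<^sub>m p - X0)"
  defines "U0 \<equiv> (1\<^sub>m p + X0) * C0 * E"
  defines "S0 \<equiv> U0 * M0 * transpose_mat U0"
    and "W \<equiv> 2 \<cdot>\<^sub>m (C0 * dX * (C0 * E)) * transpose_mat (U0 * M0)"
  shows "2 \<cdot>\<^sub>m (C0 * dX * transpose_mat C0 * S0) - 2 \<cdot>\<^sub>m (S0 * C0 * dX * transpose_mat C0)
    = W + transpose_mat W"
proof -
  define Q0 where "Q0 = (1\<^sub>m p + X0) * C0"
  have X0c: "X0 \<in> carrier_mat p p" and skw: "transpose_mat dX = - dX" and dXc: "dX \<in> carrier_mat p p"
    using X0 dX unfolding skew_def by auto
  have C0c: "C0 \<in> carrier_mat p p" unfolding C0_def using skew_minv[OF X0] by simp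
  have d: "dim_row C0 = p" "dim_col C0 = p" "dim_row Q0 = p" "dim_col Q0 = p" "dim_row dX = p" "dim_col dX = p"
    "dim_row E = p" "dim_col E = r" "dim_row M0 = r" "dim_col M0 = r"
    using C0c X0c dXc E M0 unfolding Q0_def by auto
  have CQ: "transpose_mat C0 * Q0 = C0"
    unfolding C0_def Q0_def by (rule skew_resolvent_transpose_cayley[OF X0])
  have CQ': "transpose_mat C0 * (Q0 * Y) = C0 * Y" if "dim_row Y = p" for Y
    using mult_assoc_dims[of "transpose_mat C0" Q0 Y] that d CQ by simp
  have QC': "transpose_mat Q0 * (C0 * Y) = transpose_mat C0 * Y" if "dim_row Y = p" for Y
    using mult_assoc_dims[of "transpose_mat Q0" C0 Y] arg_cong[OF CQ, of transpose_mat]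
      transpose_mult_dims[of "transpose_mat C0" Q0] that d by simp
  have U0Q: "U0 = Q0 * E" unfolding U0_def Q0_def ..
  have left: "2 \<cdot>\<^sub>m (C0 * dX * transpose_mat C0 * S0) = W"
    unfolding W_def S0_def U0Q by (simp add: mat_normalize_rules d sym CQ')
  have right: "- (2 \<cdot>\<^sub>m (S0 * C0 * dX * transpose_mat C0)) = transpose_mat W"
    unfolding W_def S0_def U0Q
    apply (simp add: mat_normalize_rules d sym QC' skw)
    apply (rule eq_matI)
    apply (simp_all only: index_mat_rules d)
    done
  have "2 \<cdot>\<^sub>m (C0 * dX * transpose_mat C0 * S0) - 2 \<cdot>\<^sub>m (S0 * C0 * dX * transpose_mat C0)
      = 2 \<cdot>\<^sub>m (C0 * dX * transpose_mat C0 * S0) + - (2 \<cdot>\<^sub>m (S0 * C0 * dX * transpose_mat C0))"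
    unfolding S0_def U0Q by (rule eq_matI) (simp_all only: index_mat_rules d)
  then show ?thesis unfolding left right .
qed

lemma cayley_congruence_remainder:
  fixes X X0 E M M0 :: "real mat"
  assumes X: "skew p X" and X0: "skew p X0" and E: "E \<in> carrier_mat p r" and oE: "op_bounded E 1"
    and M: "M \<in> carrier_mat r r" and M0: "M0 \<in> carrier_mat r r" and sym: "transpose_mat M0 = M0"
    and oM0: "op_bounded M0 m" and m: "0 \<le> m"
  defines "C0 \<equiv> minv (1\<^sub>m p - X0)" and "dX \<equiv> X - X0"
  defines "U \<equiv> (1\<^sub>m p + X) * minv (1\<^sub>m p - X) * E" and "U0 \<equiv> (1\<^sub>m p + X0) * C0 * E"
  defines "S0 \<equiv> U0 * M0 * transpose_mat U0"
  shows "fnorm (U * M * transpose_mat U - S0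
      - (2 \<cdot>\<^sub>m (C0 * dX * transpose_mat C0 * S0) - 2 \<cdot>\<^sub>m (S0 * C0 * dX * transpose_mat C0)
         + U0 * (M - M0) * transpose_mat U0))
    \<le> 8 * m * (fnorm dX)\<^sup>2 + 2 * (fnorm dX)\<^sup>2 + 2 * (fnorm (M - M0))\<^sup>2"
proof -
  define V where "V = 2 \<cdot>\<^sub>m (C0 * dX * (C0 * E))"
  have dXs: "skew p dX" unfolding dX_def by (rule skew_diff[OF X X0])
  have Vc: "V \<in> carrier_mat p r"
    unfolding V_def C0_def using skew_minv[OF X0] dXs E unfolding skew_def by auto
  have lin: "2 \<cdot>\<^sub>m (C0 * dX * transpose_mat C0 * S0) - 2 \<cdot>\<^sub>m (S0 * C0 * dX * transpose_mat C0)
      = V * transpose_mat (U0 * M0) + transpose_mat (V * transpose_mat (U0 * M0))"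
    unfolding V_def S0_def U0_def C0_def by (rule cayley_linear_term[OF X0 dXs E M0 sym])
  show ?thesis unfolding lin unfolding S0_def
    by (rule congruence_remainder_bound[OF cayley_factor_carrier[OF X E, folded U_def]
          cayley_factor_carrier[OF X0 E, folded C0_def, folded U0_def] Vc M M0 sym
          cayley_factor_contraction[OF X E oE, folded U_def]
          cayley_factor_contraction[OF X0 E oE, folded C0_def, folded U0_def] oM0 m
          cayley_factor_bounds[OF X X0 E oE, folded C0_def dX_def U_def, folded U0_def V_def]])
qed

lemma Ucay_carrier:
  assumes "A \<in> carrier_mat (p-r) r" and "r \<le> p"
  shows "Ucay p r A \<in> carrier_mat p r"
  unfolding Ucay_def by (rule cayley_factor_carrier[OF Xphi_skew[OF assms] Ipr_carrier])

definition Sigma_lin :: "nat \<Rightarrow> nat \<Rightarrow> real mat \<Rightarrow> real vec \<Rightarrow> real mat \<Rightarrow> real vec \<Rightarrow> real mat" where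
  "Sigma_lin p r A0 \<mu>0 A \<mu> =
    (let C0 = minv (1\<^sub>m p - Xphi p r A0); S0 = Sigma p r A0 \<mu>0; U0 = Ucay p r A0;
         dX = Xphi p r A - Xphi p r A0 in
     2 \<cdot>\<^sub>m (C0 * dX * transpose_mat C0 * S0) - 2 \<cdot>\<^sub>m (S0 * C0 * dX * transpose_mat C0)
       + U0 * (Mmu r \<mu> - Mmu r \<mu>0) * transpose_mat U0)"

lemma DU_mult_vecm:
  assumes A0: "A0 \<in> carrier_mat (p-r) r" and B: "B \<in> carrier_mat (p-r) r" and rp: "r \<le> p"
  defines "C0 \<equiv> minv (1\<^sub>m p - Xphi p r A0)"
  shows "DU p r A0 *\<^sub>v vecm B = vecm (2 \<cdot>\<^sub>m (C0 * Xphi p r B * (C0 * Ipr p r)))"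
proof -
  let ?E = "Ipr p r" and ?P = "transpose_mat (Ipr p r) * transpose_mat C0"
  have C0c: "C0 \<in> carrier_mat p p" unfolding C0_def using skew_minv[OF Xphi_skew[OF A0 rp]] by simp
  have Pc: "?P \<in> carrier_mat r p" using C0c Ipr_carrier by auto
  have Gc: "Gam p r \<in> carrier_mat (p*p) (r*(p-r))" unfolding Gam_def by (auto simp: kron_def commut_def)
  have kc: "kron ?P C0 \<in> carrier_mat (r*p) (p*p)" using Pc C0c by (auto simp: kron_def)
  have vB: "vecm B \<in> carrier_vec (r*(p-r))" using vecm_carrier[OF B] by (simp add: mult.commute)
  have "DU p r A0 *\<^sub>v vecm B = 2 \<cdot>\<^sub>v (kron ?P C0 *\<^sub>v (Gam p r *\<^sub>v vecm B))"
    unfolding DU_def C0_def[symmetric]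
    using smult_mat_mult_vec[OF mult_carrier_mat[OF kc Gc] vB] assoc_mult_mat_vec[OF kc Gc vB] by simp
  also have "kron ?P C0 *\<^sub>v (Gam p r *\<^sub>v vecm B) = vecm (C0 * Xphi p r B * transpose_mat ?P)"
    unfolding Gam_vecm[OF B rp] by (rule kron_vecm[OF Pc C0c Xphi_carrier[OF B rp]])
  also have "transpose_mat ?P = C0 * ?E"
    using transpose_mult[of "transpose_mat ?E" r p "transpose_mat C0" p] Ipr_carrier C0c by simp
  finally show ?thesis by (simp add: vecm_smult)
qed

lemma DphiSigma_mult_vecm:
  assumes A0: "A0 \<in> carrier_mat (p-r) r" and B: "B \<in> carrier_mat (p-r) r" and rp: "r \<le> p"
    and \<mu>0: "\<mu>0 \<in> carrier_vec (r * (r + 1) div 2)"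
  defines "W \<equiv> 2 \<cdot>\<^sub>m (minv (1\<^sub>m p - Xphi p r A0) * Xphi p r B * (minv (1\<^sub>m p - Xphi p r A0) * Ipr p r))
      * transpose_mat (Ucay p r A0 * Mmu r \<mu>0)"
  shows "DphiSigma p r A0 \<mu>0 *\<^sub>v vecm B = vecm (W + transpose_mat W)"
proof -
  let ?V = "2 \<cdot>\<^sub>m (minv (1\<^sub>m p - Xphi p r A0) * Xphi p r B * (minv (1\<^sub>m p - Xphi p r A0) * Ipr p r))"
  let ?K = "kron (Ucay p r A0 * Mmu r \<mu>0) (1\<^sub>m p)"
  have U0c: "Ucay p r A0 \<in> carrier_mat p r" by (rule Ucay_carrier[OF A0 rp])
  have M0c: "Mmu r \<mu>0 \<in> carrier_mat r r" using symm_Mmu[OF \<mu>0] unfolding symm_def by auto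
  have C0c: "minv (1\<^sub>m p - Xphi p r A0) \<in> carrier_mat p p" using skew_minv[OF Xphi_skew[OF A0 rp]] by simp
  have Vc: "?V \<in> carrier_mat p r" using C0c Xphi_carrier[OF B rp] Ipr_carrier by auto
  have Wc: "W \<in> carrier_mat p p" unfolding W_def using Vc U0c M0c by auto
  have Kc: "commut p p \<in> carrier_mat (p*p) (p*p)" by (simp add: commut_def)
  have kc: "?K \<in> carrier_mat (p*p) (r*p)" using U0c M0c by (auto simp: kron_def)
  have DUc: "DU p r A0 \<in> carrier_mat (r*p) (r*(p-r))"
    unfolding DU_def Gam_def using C0c Ipr_carrier by (auto simp: kron_def commut_def)
  have vB: "vecm B \<in> carrier_vec (r*(p-r))" using vecm_carrier[OF B] by (simp add: mult.commute)
  have "DphiSigma p r A0 \<mu>0 *\<^sub>v vecm B = (1\<^sub>m (p*p) + commut p p) *\<^sub>v (?K *\<^sub>v (DU p r A0 *\<^sub>v vecm B))"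
    unfolding DphiSigma_def
    using assoc_mult_mat_vec[OF mult_carrier_mat[OF _ kc] DUc vB, of "1\<^sub>m (p*p) + commut p p" "p*p"]
      assoc_mult_mat_vec[OF _ kc mult_mat_vec_carrier[OF DUc vB], of "1\<^sub>m (p*p) + commut p p" "p*p"] Kc
    by simp
  also have "?K *\<^sub>v (DU p r A0 *\<^sub>v vecm B) = vecm W"
    unfolding DU_mult_vecm[OF A0 B rp] W_def
    using kron_vecm[OF mult_carrier_mat[OF U0c M0c] one_carrier_mat Vc] by (simp add: left_mult_one_mat[OF Vc])
  also have "(1\<^sub>m (p*p) + commut p p) *\<^sub>v vecm W = vecm W + vecm (transpose_mat W)"
    using add_mult_distrib_mat_vec[OF one_carrier_mat Kc vecm_carrier[OF Wc]] commut_vecm[OF Wc] Wc by simp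
  also have "\<dots> = vecm (W + transpose_mat W)" using vecm_add[OF Wc] Wc by simp
  finally show ?thesis .
qed

lemma DmuSigma_mult_vec:
  assumes A0: "A0 \<in> carrier_mat (p-r) r" and rp: "r \<le> p" and d: "d \<in> carrier_vec (r * (r + 1) div 2)"
  shows "DmuSigma p r A0 *\<^sub>v d = vecm (Ucay p r A0 * unvech r d * transpose_mat (Ucay p r A0))"
proof -
  have U0c: "Ucay p r A0 \<in> carrier_mat p r" by (rule Ucay_carrier[OF A0 rp])
  have kc: "kron (Ucay p r A0) (Ucay p r A0) \<in> carrier_mat (p*p) (r*r)" using U0c by (auto simp: kron_def)
  have Dc: "dupl_mat r \<in> carrier_mat (r*r) (r * (r + 1) div 2)" by (simp add: dupl_mat_def)
  have Mc: "unvech r d \<in> carrier_mat r r" using symm_unvech unfolding symm_def by auto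
  have "DmuSigma p r A0 *\<^sub>v d = kron (Ucay p r A0) (Ucay p r A0) *\<^sub>v (dupl_mat r *\<^sub>v vech (unvech r d))"
    unfolding DmuSigma_def dupl_eq_dupl_mat vech_unvech[OF d] by (rule assoc_mult_mat_vec[OF kc Dc d])
  also have "\<dots> = vecm (Ucay p r A0 * unvech r d * transpose_mat (Ucay p r A0))"
    unfolding vecm_dupl_mat[OF symm_unvech, symmetric] by (rule kron_vecm[OF U0c U0c Mc])
  finally show ?thesis .
qed

lemma Sigma_carrier:
  assumes "inD p r A \<mu>" and "r \<le> p"
  shows "Sigma p r A \<mu> \<in> carrier_mat p p"
proof -
  have "Ucay p r A \<in> carrier_mat p r" and "Mmu r \<mu> \<in> carrier_mat r r"
    using assms Ucay_carrier symm_Mmu unfolding inD_def symm_def by auto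
  then show ?thesis unfolding Sigma_def by auto
qed

lemma vecm_Sigma_lin:
  assumes rp: "r \<le> p" and A: "A \<in> carrier_mat (p-r) r" and A0: "A0 \<in> carrier_mat (p-r) r"
    and \<mu>: "\<mu> \<in> carrier_vec (r * (r + 1) div 2)" and \<mu>0: "\<mu>0 \<in> carrier_vec (r * (r + 1) div 2)"
  shows "vecm (Sigma_lin p r A0 \<mu>0 A \<mu>) = DSigma p r A0 \<mu>0 *\<^sub>v (theta A \<mu> - theta A0 \<mu>0)"
proof -
  let ?n = "r * (r + 1) div 2" and ?E = "Ipr p r"
  let ?C0 = "minv (1\<^sub>m p - Xphi p r A0)" and ?U0 = "Ucay p r A0" and ?M0 = "Mmu r \<mu>0"
  let ?DM = "unvech r (\<mu> - \<mu>0)"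
  define W where "W = 2 \<cdot>\<^sub>m (?C0 * Xphi p r (A - A0) * (?C0 * ?E)) * transpose_mat (?U0 * ?M0)"
  have AA: "A - A0 \<in> carrier_mat (p-r) r" and d\<mu>: "\<mu> - \<mu>0 \<in> carrier_vec ?n" using A A0 \<mu> \<mu>0 by auto
  have dX: "Xphi p r A - Xphi p r A0 = Xphi p r (A - A0)" by (rule Xphi_minus[OF A A0 rp])
  have M0: "?M0 \<in> carrier_mat r r" "transpose_mat ?M0 = ?M0" using symm_Mmu[OF \<mu>0] unfolding symm_def by auto
  have U0c: "?U0 \<in> carrier_mat p r" by (rule Ucay_carrier[OF A0 rp])
  have Wc: "W \<in> carrier_mat p p" unfolding W_def using U0c M0 skew_minv[OF Xphi_skew[OF A0 rp]] Ipr_carrier by auto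
  have DMc: "?U0 * ?DM * transpose_mat ?U0 \<in> carrier_mat p p" using U0c symm_unvech unfolding symm_def by auto
  have lin: "Sigma_lin p r A0 \<mu>0 A \<mu> = (W + transpose_mat W) + ?U0 * ?DM * transpose_mat ?U0"
    using cayley_linear_term[OF Xphi_skew[OF A0 rp] Xphi_skew[OF AA rp] Ipr_carrier M0]
    unfolding Sigma_lin_def Let_def W_def dX Sigma_def Ucay_def Mmu_eq_unvech[OF \<mu>] Mmu_eq_unvech[OF \<mu>0]
      unvech_diff[OF \<mu> \<mu>0] by simp
  have Dphi: "DphiSigma p r A0 \<mu>0 \<in> carrier_mat (p*p) ((p-r)*r)"
    unfolding DphiSigma_def DU_def Gam_def using U0c M0 skew_minv[OF Xphi_skew[OF A0 rp]] Ipr_carrier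
    by (auto simp: kron_def commut_def)
  have Dmu: "DmuSigma p r A0 \<in> carrier_mat (p*p) ?n"
    unfolding DmuSigma_def dupl_eq_dupl_mat using U0c by (auto simp: kron_def dupl_mat_def)
  have "DSigma p r A0 \<mu>0 *\<^sub>v (theta A \<mu> - theta A0 \<mu>0)
      = DphiSigma p r A0 \<mu>0 *\<^sub>v vecm (A - A0) + DmuSigma p r A0 *\<^sub>v (\<mu> - \<mu>0)"
    unfolding DSigma_def theta_minus[OF A A0 \<mu> \<mu>0] vecm_minus[OF A A0, symmetric]
    by (rule hcat_mult[OF Dphi Dmu vecm_carrier[OF AA] d\<mu>])
  also have "\<dots> = vecm (W + transpose_mat W) + vecm (?U0 * ?DM * transpose_mat ?U0)"
    unfolding DphiSigma_mult_vecm[OF A0 AA rp \<mu>0] DmuSigma_mult_vec[OF A0 rp d\<mu>] W_def ..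
  also have "\<dots> = vecm (Sigma_lin p r A0 \<mu>0 A \<mu>)"
    unfolding lin using vecm_add[OF _ DMc, of "W + transpose_mat W"] Wc by simp
  finally show ?thesis ..
qed

lemma Sigma_remainder_bound:
  assumes r1: "1 \<le> r" and rp: "r \<le> p" and D: "inD p r A \<mu>" and D0: "inD p r A0 \<mu>0"
  shows "fnorm (Sigma p r A \<mu> - Sigma p r A0 \<mu>0 - Sigma_lin p r A0 \<mu>0 A \<mu>)
    \<le> 16 * (1 + snorm (Mmu r \<mu>0)) * (vnorm (theta A \<mu> - theta A0 \<mu>0))\<^sup>2"
proof -
  let ?n = "r * (r + 1) div 2"
  have A: "A \<in> carrier_mat (p-r) r" and A0: "A0 \<in> carrier_mat (p-r) r"
    and \<mu>: "\<mu> \<in> carrier_vec ?n" and \<mu>0: "\<mu>0 \<in> carrier_vec ?n"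
    using D D0 unfolding inD_def by auto
  have AA: "A - A0 \<in> carrier_mat (p-r) r" and d\<mu>: "\<mu> - \<mu>0 \<in> carrier_vec ?n" using A A0 \<mu> \<mu>0 by auto
  define m where "m = snorm (Mmu r \<mu>0)"
  define a where "a = fnorm (A - A0)"
  define b where "b = vnorm (\<mu> - \<mu>0)"
  have M: "Mmu r \<mu> \<in> carrier_mat r r" and M0: "Mmu r \<mu>0 \<in> carrier_mat r r" "transpose_mat (Mmu r \<mu>0) = Mmu r \<mu>0"
    using symm_Mmu[OF \<mu>] symm_Mmu[OF \<mu>0] unfolding symm_def by auto
  have oM0: "op_bounded (Mmu r \<mu>0) m" and m: "0 \<le> m"
    unfolding m_def using snorm_op_bounded[OF M0(1)] r1 by auto
  have "fnorm (Sigma p r A \<mu> - Sigma p r A0 \<mu>0 - Sigma_lin p r A0 \<mu>0 A \<mu>)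
      \<le> 8 * m * (fnorm (Xphi p r A - Xphi p r A0))\<^sup>2 + 2 * (fnorm (Xphi p r A - Xphi p r A0))\<^sup>2
        + 2 * (fnorm (Mmu r \<mu> - Mmu r \<mu>0))\<^sup>2"
    using cayley_congruence_remainder[OF Xphi_skew[OF A rp] Xphi_skew[OF A0 rp] Ipr_carrier op_bounded_Ipr
        M M0 oM0 m]
    unfolding Sigma_lin_def Sigma_def Ucay_def Let_def .
  also have "(fnorm (Xphi p r A - Xphi p r A0))\<^sup>2 = 2 * a\<^sup>2"
    unfolding a_def Xphi_minus[OF A A0 rp] by (rule fnorm_Xphi_sq[OF AA rp])
  also have "(fnorm (Mmu r \<mu> - Mmu r \<mu>0))\<^sup>2 \<le> 2 * b\<^sup>2"
    unfolding b_def Mmu_eq_unvech[OF \<mu>] Mmu_eq_unvech[OF \<mu>0] unvech_diff[OF \<mu> \<mu>0]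
    by (rule fnorm_unvech_sq_le[OF d\<mu>])
  also have "8 * m * (2 * a\<^sup>2) + 2 * (2 * a\<^sup>2) + 2 * (2 * b\<^sup>2) \<le> 16 * (1 + m) * (a\<^sup>2 + b\<^sup>2)"
    using m by (simp add: algebra_simps)
  also have "a\<^sup>2 + b\<^sup>2 = (vnorm (theta A \<mu> - theta A0 \<mu>0))\<^sup>2"
    unfolding theta_minus[OF A A0 \<mu> \<mu>0] vecm_minus[OF A A0, symmetric] vnorm_append_sq a_def b_def fnorm_vecm ..
  finally show ?thesis unfolding m_def by simp
qed

theorem theorem3:
  fixes p r :: nat and A A0 :: "real mat" and \<mu> \<mu>0 :: "real vec"
  assumes "1 \<le> r" and "r \<le> p"
    and "inD p r A \<mu>" and "inD p r A0 \<mu>0"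
  shows "\<exists>R \<in> carrier_mat p p.
    vecm (Sigma p r A \<mu> - Sigma p r A0 \<mu>0)
      = DSigma p r A0 \<mu>0 *\<^sub>v (theta A \<mu> - theta A0 \<mu>0) + vecm R
    \<and> fnorm R \<le> 16 * (1 + snorm (Mmu r \<mu>0)) * (vnorm (theta A \<mu> - theta A0 \<mu>0))^2
    \<and> (let C0 = minv (1\<^sub>m p - Xphi p r A0); S0 = Sigma p r A0 \<mu>0; U0 = Ucay p r A0;
           dX = Xphi p r A - Xphi p r A0 in
       Sigma p r A \<mu> - S0
         = 2 \<cdot>\<^sub>m (C0 * dX * transpose_mat C0 * S0) - 2 \<cdot>\<^sub>m (S0 * C0 * dX * transpose_mat C0)
           + U0 * (Mmu r \<mu> - Mmu r \<mu>0) * transpose_mat U0 + R)"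
proof -
  have A: "A \<in> carrier_mat (p-r) r" and A0: "A0 \<in> carrier_mat (p-r) r"
    and \<mu>: "\<mu> \<in> carrier_vec (r * (r + 1) div 2)" and \<mu>0: "\<mu>0 \<in> carrier_vec (r * (r + 1) div 2)"
    using assms(3,4) unfolding inD_def by auto
  let ?L = "Sigma_lin p r A0 \<mu>0 A \<mu>"
  define R where "R = Sigma p r A \<mu> - Sigma p r A0 \<mu>0 - ?L"
  have S: "Sigma p r A \<mu> \<in> carrier_mat p p" and S0: "Sigma p r A0 \<mu>0 \<in> carrier_mat p p"
    using Sigma_carrier assms by auto
  have L: "?L \<in> carrier_mat p p"
    unfolding Sigma_lin_def Let_def using Ucay_carrier[OF A0 assms(2)] by auto
  have R: "R \<in> carrier_mat p p" unfolding R_def using S S0 L by auto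
  have split: "Sigma p r A \<mu> - Sigma p r A0 \<mu>0 = ?L + R"
    unfolding R_def by (rule eq_matI) (use S S0 L in auto)
  show ?thesis
  proof (intro bexI[OF _ R] conjI)
    show "vecm (Sigma p r A \<mu> - Sigma p r A0 \<mu>0) = DSigma p r A0 \<mu>0 *\<^sub>v (theta A \<mu> - theta A0 \<mu>0) + vecm R"
      unfolding split vecm_add[OF L R] vecm_Sigma_lin[OF assms(2) A A0 \<mu> \<mu>0] ..
    show "fnorm R \<le> 16 * (1 + snorm (Mmu r \<mu>0)) * (vnorm (theta A \<mu> - theta A0 \<mu>0))^2"
      unfolding R_def by (rule Sigma_remainder_bound[OF assms])
  qed (use split in \<open>simp add: Sigma_lin_def Let_def\<close>)
qed

end
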